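(* Let $\Lambda$ be a finite-dimensional $k$-algebra with orthogonal primitive idempotents $1=e_1+e_2$. Identifying $K_0(\operatorname{proj}\Lambda)\otimes\mathbb{R}$ with $\mathbb{R}^2$ via $[e_1\Lambda]\mapsto(1,0)$, $[e_2\Lambda]\mapsto(0,1)$: (a) $\operatorname{cone}\{(-1,0),(0,1)\}\in\Sigma(\Lambda)$ if and only if $e_2\Lambda e_1=0$; (b) $\operatorname{cone}\{(1,0),(0,-1)\}\in\Sigma(\Lambda)$ if and only if $e_1\Lambda e_2=0$.
   Context: $k$ is a field. $\Sigma(\Lambda)$ is the $g$-fan: the set of cones $\operatorname{cone}\{[T_1],\dots,[T_m]\}$ for basic 2-term presilting complexes $T=T_1\oplus\cdots\oplus T_m$ ($T_i$ indecomposable) in $K^b(\operatorname{proj}\Lambda)$, where 2-term means $T^i=0$ for $i\ne0,-1$, presilting means $\operatorname{Hom}(T,T[\ell])=0$ for $\ell>0$, and $[T]=[T^0]-[T^{-1}]$. *)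

theory Defs
  imports "HOL-Analysis.Analysis"
begin

text \<open>The ring type 'a is Lambda; sc is the action of the field k making Lambda a
finite-dimensional k-algebra.\<close>

definition fd_algebra :: "('k::field \<Rightarrow> 'a::ring_1 \<Rightarrow> 'a) \<Rightarrow> bool" where
  "fd_algebra sc \<longleftrightarrow> vector_space sc
     \<and> (\<forall>c x y. sc c (x * y) = sc c x * y \<and> sc c (x * y) = x * sc c y)
     \<and> (\<exists>B. finite B \<and> module.span sc B = UNIV)"

definition idem :: "'a::ring_1 \<Rightarrow> bool" where
  "idem e \<longleftrightarrow> e * e = e"

definition primitive_idem :: "'a::ring_1 \<Rightarrow> bool" where
  "primitive_idem e \<longleftrightarrow> idem e \<and> e \<noteq> 0 \<and>
     (\<forall>f g. idem f \<and> idem g \<and> f * g = 0 \<and> g * f = 0 \<and> f + g = e \<longrightarrow> f = 0 \<or> g = 0)"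

definition corner :: "'a::ring_1 \<Rightarrow> 'a \<Rightarrow> 'a set" where
  "corner e e' = {e * x * e' | x. True}"

text \<open>A projective is a list [eps_1,...,eps_n] of idempotents (from {e1,e2}), standing for
the right module eps_1 Lambda (+) ... (+) eps_n Lambda.  A morphism
(+)_q eps_q Lambda \<rightarrow> (+)_p delta_p Lambda is a matrix with entries M p q in delta_p Lambda eps_q,
acting by left multiplication; composition is matrix multiplication.\<close>

type_synonym 'a mat = "nat \<Rightarrow> nat \<Rightarrow> 'a"

definition hom :: "'a::ring_1 list \<Rightarrow> 'a list \<Rightarrow> 'a mat set" where
  "hom xs ys = {M. \<forall>p q. (p < length ys \<and> q < length xs \<longrightarrow> M p q \<in> corner (ys ! p) (xs ! q))
                       \<and> (\<not> (p < length ys \<and> q < length xs) \<longrightarrow> M p q = 0)}"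

definition mmul :: "nat \<Rightarrow> 'a::ring_1 mat \<Rightarrow> 'a mat \<Rightarrow> 'a mat" where
  "mmul n M N = (\<lambda>p r. \<Sum>q<n. M p q * N q r)"

definition madd :: "'a::ring_1 mat \<Rightarrow> 'a mat \<Rightarrow> 'a mat" where
  "madd M N = (\<lambda>p q. M p q + N p q)"

definition msub :: "'a::ring_1 mat \<Rightarrow> 'a mat \<Rightarrow> 'a mat" where
  "msub M N = (\<lambda>p q. M p q - N p q)"

definition idm :: "'a::ring_1 list \<Rightarrow> 'a mat" where
  "idm xs = (\<lambda>p q. if p = q \<and> p < length xs then xs ! p else 0)"

text \<open>A 2-term complex T = (T^{-1}, T^0, d) with d : T^{-1} \<rightarrow> T^0.\<close>
type_synonym 'a cx = "'a list \<times> 'a list \<times> 'a mat"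

definition src :: "'a cx \<Rightarrow> 'a list" where "src T = fst T"
definition tgt :: "'a cx \<Rightarrow> 'a list" where "tgt T = fst (snd T)"
definition dif :: "'a cx \<Rightarrow> 'a mat" where "dif T = snd (snd T)"

definition is_cx :: "'a::ring_1 \<Rightarrow> 'a \<Rightarrow> 'a cx \<Rightarrow> bool" where
  "is_cx e1 e2 T \<longleftrightarrow> set (src T) \<subseteq> {e1, e2} \<and> set (tgt T) \<subseteq> {e1, e2}
     \<and> dif T \<in> hom (src T) (tgt T)"

definition chain_map :: "'a::ring_1 cx \<Rightarrow> 'a cx \<Rightarrow> 'a mat \<times> 'a mat \<Rightarrow> bool" where
  "chain_map T U f \<longleftrightarrow> fst f \<in> hom (src T) (src U) \<and> snd f \<in> hom (tgt T) (tgt U)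
     \<and> mmul (length (tgt T)) (snd f) (dif T) = mmul (length (src U)) (dif U) (fst f)"

definition null_htp :: "'a::ring_1 cx \<Rightarrow> 'a cx \<Rightarrow> 'a mat \<times> 'a mat \<Rightarrow> bool" where
  "null_htp T U f \<longleftrightarrow> (\<exists>h \<in> hom (tgt T) (src U).
      fst f = mmul (length (tgt T)) h (dif T) \<and> snd f = mmul (length (src U)) (dif U) h)"

definition cm_comp :: "'a::ring_1 cx \<Rightarrow> 'a mat \<times> 'a mat \<Rightarrow> 'a mat \<times> 'a mat \<Rightarrow> 'a mat \<times> 'a mat" where
  "cm_comp U g f = (mmul (length (src U)) (fst g) (fst f), mmul (length (tgt U)) (snd g) (snd f))"

definition cm_sub :: "'a::ring_1 mat \<times> 'a mat \<Rightarrow> 'a mat \<times> 'a mat \<Rightarrow> 'a mat \<times> 'a mat" where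
  "cm_sub f g = (msub (fst f) (fst g), msub (snd f) (snd g))"

definition cm_id :: "'a::ring_1 cx \<Rightarrow> 'a mat \<times> 'a mat" where
  "cm_id T = (idm (src T), idm (tgt T))"

definition kiso :: "'a::ring_1 cx \<Rightarrow> 'a cx \<Rightarrow> bool" where
  "kiso T U \<longleftrightarrow> (\<exists>f g. chain_map T U f \<and> chain_map U T g
      \<and> null_htp T T (cm_sub (cm_comp U g f) (cm_id T))
      \<and> null_htp U U (cm_sub (cm_comp T f g) (cm_id U)))"

definition zero_cx :: "'a::ring_1 cx" where
  "zero_cx = ([], [], \<lambda>_ _. 0)"

definition is_zero :: "'a::ring_1 cx \<Rightarrow> bool" where
  "is_zero T \<longleftrightarrow> kiso T zero_cx"

definition dsum :: "'a::ring_1 cx \<Rightarrow> 'a cx \<Rightarrow> 'a cx" where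
  "dsum T U = (src T @ src U, tgt T @ tgt U,
     \<lambda>p q. if p < length (tgt T) then (if q < length (src T) then dif T p q else 0)
           else (if q < length (src T) then 0
                 else dif U (p - length (tgt T)) (q - length (src T))))"

definition indec :: "'a::ring_1 \<Rightarrow> 'a \<Rightarrow> 'a cx \<Rightarrow> bool" where
  "indec e1 e2 T \<longleftrightarrow> is_cx e1 e2 T \<and> \<not> is_zero T \<and>
     (\<forall>U V. is_cx e1 e2 U \<and> is_cx e1 e2 V \<and> kiso T (dsum U V) \<longrightarrow> is_zero U \<or> is_zero V)"

text \<open>For a 2-term complex T, Hom(T,T[l]) = 0 automatically for l \<ge> 2, and Hom(T,T[1]) is the
space of maps h : T^{-1} \<rightarrow> T^0 modulo those of the form s d + d t (null-homotopic ones).\<close>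
definition presilting :: "'a::ring_1 cx \<Rightarrow> bool" where
  "presilting T \<longleftrightarrow> (\<forall>h \<in> hom (src T) (tgt T). \<exists>s \<in> hom (tgt T) (tgt T). \<exists>t \<in> hom (src T) (src T).
      h = madd (mmul (length (tgt T)) s (dif T)) (mmul (length (src T)) (dif T) t))"

definition mult :: "'a \<Rightarrow> 'a list \<Rightarrow> nat" where
  "mult e xs = length (filter (\<lambda>x. x = e) xs)"

definition gvec :: "'a \<Rightarrow> 'a \<Rightarrow> 'a cx \<Rightarrow> real \<times> real" where
  "gvec e1 e2 T = (real (mult e1 (tgt T)) - real (mult e1 (src T)),
                   real (mult e2 (tgt T)) - real (mult e2 (src T)))"

definition poscone :: "(real \<times> real) set \<Rightarrow> (real \<times> real) set" where
  "poscone S = {\<Sum>v\<in>F. c v *\<^sub>R v | F c. finite F \<and> F \<subseteq> S \<and> (\<forall>v. c v \<ge> 0)}"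

definition gfan :: "'a::ring_1 \<Rightarrow> 'a \<Rightarrow> (real \<times> real) set set" where
  "gfan e1 e2 = {poscone (gvec e1 e2 ` set Ts) | Ts.
      (\<forall>T \<in> set Ts. indec e1 e2 T)
      \<and> (\<forall>i < length Ts. \<forall>j < length Ts. i \<noteq> j \<longrightarrow> \<not> kiso (Ts ! i) (Ts ! j))
      \<and> presilting (foldr dsum Ts zero_cx)}"

end

(*
  If cone{(-1, 0), (0, 1)} lies in the g-fan, the presilting complex realizing it has
  summands T and U with g-vectors (-m, 0) and (0, n), m, n > 0. Then Hom(T, U[1]) = 0 says
  that every map T^-1 -> U^0 has the form s d_T + d_U t, so modulo the maps factoring
  through d_U, Hom(T^-1, U^0) is a quotient of Hom(T^0, U^0). Since T^-1 has m more copies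
  of e1\<Lambda> than T^0 and as many copies of e2\<Lambda>, counting dimensions gives
  Hom(e1\<Lambda>, coker d_U) = 0, i.e. dim U^0 e1 <= dim U^-1 e1; as U^0 has n more copies of
  e2\<Lambda> than U^-1 and as many copies of e1\<Lambda>, this forces e2\<Lambda>e1 = 0.
  Conversely, if e2\<Lambda>e1 = Hom(e1\<Lambda>, e2\<Lambda>) vanishes then e1\<Lambda>[1] (+) e2\<Lambda> is presilting,
  and its two summands are indecomposable because a splitting of either would split the
  primitive idempotent e1 or e2 in its endomorphism ring e\<Lambda>e.
  Part (b) is part (a) for the idempotents exchanged, which swaps the coordinates of g-vectors.
*)

theory Submission
  imports Defs "HOL-Library.Function_Algebras"
begin

section \<open>Dimensions of finitely spanned subsets of a vector space\<close>

context vector_space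

begin

definition finitely_spanned :: "'b set \<Rightarrow> bool" where
  "finitely_spanned S \<longleftrightarrow> (\<exists>F. finite F \<and> S \<subseteq> local.span F)"

lemma finitely_spanned_subset: "S \<subseteq> T \<Longrightarrow> local.finitely_spanned T \<Longrightarrow> local.finitely_spanned S"
  unfolding finitely_spanned_def by blast

lemma finitely_spanned_basis:
  assumes "local.finitely_spanned S"
  obtains B where "B \<subseteq> S" "local.independent B" "S \<subseteq> local.span B" "finite B" "card B = local.dim S"
proof -
  obtain B where B: "B \<subseteq> S" "local.independent B" "S \<subseteq> local.span B" "card B = local.dim S"
    using basis_exists by blast
  obtain F where "finite F" "S \<subseteq> local.span F"
    using assms finitely_spanned_def by blast
  then have "finite B"
    using independent_span_bound B by blast
  with B that show ?thesis by blast
qed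

lemma independent_card_le_dim_finitely_spanned:
  assumes "local.independent B" "B \<subseteq> V" "local.finitely_spanned V"
  shows "finite B \<and> card B \<le> local.dim V"
proof -
  obtain C where C: "finite C" "V \<subseteq> local.span C" "card C = local.dim V"
    using finitely_spanned_basis[OF assms(3)] by metis
  show ?thesis
    using independent_span_bound[OF C(1) assms(1)] assms(2) C(2,3) by auto
qed

lemma finitely_spanned_dim_eq_0:
  assumes "local.finitely_spanned S" "local.dim S = 0"
  shows "S \<subseteq> {0}"
proof -
  obtain B where "S \<subseteq> local.span B" "finite B" "card B = 0"
    using finitely_spanned_basis assms by metis
  then show ?thesis by simp
qed

lemma dim_zero_space: "local.dim {0} = 0"
  using basis_card_eq_dim[of "{}" "{0}"] independent_empty by simp

lemma independent_Un_of_Int_subset_0: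
  assumes A: "local.subspace A" and B: "local.subspace B" and AB: "A \<inter> B \<subseteq> {0}"
    and "local.independent BA" "BA \<subseteq> A" and "local.independent BB" "BB \<subseteq> B"
  shows "local.independent (BA \<union> BB)"
  unfolding independent_explicit_finite_subsets
proof (intro allI impI ballI)
  fix T u v
  assume T: "T \<subseteq> BA \<union> BB" "finite T" and s: "(\<Sum>v\<in>T. scale (u v) v) = 0" and v: "v \<in> T"
  define TA TB where "TA = T \<inter> BA" and "TB = T - BA"
  have fin: "finite TA" "finite TB" and TBB: "TB \<subseteq> BB"
    using T unfolding TA_def TB_def by auto
  have "T = TA \<union> TB" "TA \<inter> TB = {}"
    unfolding TA_def TB_def by auto
  then have "(\<Sum>v\<in>T. scale (u v) v) = (\<Sum>v\<in>TA. scale (u v) v) + (\<Sum>v\<in>TB. scale (u v) v)"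
    using fin by (simp add: sum.union_disjoint)
  then have eq: "(\<Sum>v\<in>TA. scale (u v) v) = - (\<Sum>v\<in>TB. scale (u v) v)"
    using s by (simp add: eq_neg_iff_add_eq_0)
  have "(\<Sum>v\<in>TA. scale (u v) v) \<in> A"
    using assms(5) TA_def by (auto intro!: subspace_sum[OF A] subspace_scale[OF A])
  moreover have "(\<Sum>v\<in>TA. scale (u v) v) \<in> B"
    unfolding eq using assms(7) TBB
    by (auto intro!: subspace_neg[OF B] subspace_sum[OF B] subspace_scale[OF B])
  ultimately have zA: "(\<Sum>v\<in>TA. scale (u v) v) = 0"
    using AB by blast
  then have zB: "(\<Sum>v\<in>TB. scale (u v) v) = 0"
    using eq by simp
  show "u v = 0"
  proof (cases "v \<in> TA")
    case True
    then show ?thesis using independentD[OF assms(4) fin(1) _ zA] TA_def by blast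
  next
    case False
    then show ?thesis using independentD[OF assms(6) fin(2) TBB zB] v TA_def TB_def by blast
  qed
qed

lemma dim_direct_sum:
  assumes A: "local.subspace A" and B: "local.subspace B" and AB: "A \<inter> B \<subseteq> {0}"
    and "local.finitely_spanned A" "local.finitely_spanned B"
  shows "local.finitely_spanned {x + y | x y. x \<in> A \<and> y \<in> B}"
    and "local.dim {x + y | x y. x \<in> A \<and> y \<in> B} = local.dim A + local.dim B"
proof -
  let ?S = "{x + y | x y. x \<in> A \<and> y \<in> B}"
  obtain BA where a: "BA \<subseteq> A" "local.independent BA" "A \<subseteq> local.span BA" "finite BA" "card BA = local.dim A"
    using finitely_spanned_basis assms(4) by blast
  obtain BB where b: "BB \<subseteq> B" "local.independent BB" "B \<subseteq> local.span BB" "finite BB" "card BB = local.dim B"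
    using finitely_spanned_basis assms(5) by blast
  have "BA \<inter> BB = {}"
    using a(1,2) b(1) AB dependent_zero by blast
  then have card: "card (BA \<union> BB) = local.dim A + local.dim B"
    using a(4,5) b(4,5) card_Un_disjoint by metis
  have sp: "?S \<subseteq> local.span (BA \<union> BB)"
    using a(3) b(3) span_mono[of BA "BA \<union> BB"] span_mono[of BB "BA \<union> BB"] span_add by blast
  have "x \<in> ?S" if "x \<in> BA \<union> BB" for x
  proof (cases "x \<in> BA")
    case True
    then have "x = x + 0" "x \<in> A" "0 \<in> B" using a(1) subspace_0[OF B] by auto
    then show ?thesis by blast
  next
    case False
    then have "x = 0 + x" "0 \<in> A" "x \<in> B" using that b(1) subspace_0[OF A] by auto
    then show ?thesis by blast
  qed
  then have "BA \<union> BB \<subseteq> ?S" by blast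
  then have "card (BA \<union> BB) = local.dim ?S"
    using basis_card_eq_dim sp independent_Un_of_Int_subset_0[OF A B AB a(2,1) b(2,1)] by blast
  with card show "local.dim ?S = local.dim A + local.dim B" by simp
  show "local.finitely_spanned ?S"
    unfolding finitely_spanned_def using sp a(4) b(4) by blast
qed

end

context Vector_Spaces.linear

begin

lemma finitely_spanned_image: "vs1.finitely_spanned S \<Longrightarrow> vs2.finitely_spanned (f ` S)"
  unfolding vs1.finitely_spanned_def vs2.finitely_spanned_def
  by (metis finite_imageI spans_image)

lemma dim_image_le_finitely_spanned:
  assumes "vs1.finitely_spanned S"
  shows "vs2.dim (f ` S) \<le> vs1.dim S"
proof -
  obtain B where B: "S \<subseteq> vs1.span B" "finite B" "card B = vs1.dim S"
    using vs1.finitely_spanned_basis[OF assms] by metis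
  have "vs2.dim (f ` S) \<le> card (f ` B)"
    using vs2.dim_le_card[OF spans_image[OF B(1)]] B(2) by simp
  also have "\<dots> \<le> card B"
    using card_image_le[OF B(2)] .
  finally show ?thesis using B(3) by simp
qed

lemma dim_image_eq_finitely_spanned:
  assumes "vs1.finitely_spanned S" and inj: "inj_on f (vs1.span S)"
  shows "vs2.dim (f ` S) = vs1.dim S"
proof -
  obtain B where B: "B \<subseteq> S" "vs1.independent B" "finite B" "card B = vs1.dim S"
    using vs1.finitely_spanned_basis[OF assms(1)] by metis
  have injB: "inj_on f (vs1.span B)"
    using inj_on_subset[OF inj vs1.span_mono[OF B(1)]] .
  then have "card (f ` B) = card B"
    using card_image inj_on_subset vs1.span_superset by metis
  moreover have "card (f ` B) \<le> vs2.dim (f ` S)"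
    using vs2.independent_card_le_dim_finitely_spanned[OF independent_injective_image[OF B(2) injB]]
      B(1) finitely_spanned_image[OF assms(1)] by blast
  ultimately show ?thesis
    using dim_image_le_finitely_spanned[OF assms(1)] B(4) by simp
qed

text \<open>\<open>f\<close> induces a surjection \<open>span S\<^sub>0 / span Z\<^sub>0 \<rightarrow> span S\<^sub>1 / span Z\<^sub>1\<close>.\<close>

lemma dim_le_of_spanning_modulo:
  assumes "Z0 \<subseteq> S0" "vs1.finitely_spanned S0" "vs2.finitely_spanned Z1"
    and "f ` Z0 \<subseteq> vs2.span Z1" and "S1 \<subseteq> vs2.span (f ` S0 \<union> Z1)"
  shows "vs2.dim S1 + vs1.dim Z0 \<le> vs1.dim S0 + vs2.dim Z1"
proof -
  obtain b0 where b0: "b0 \<subseteq> Z0" "vs1.independent b0" "Z0 \<subseteq> vs1.span b0" "finite b0"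
      "card b0 = vs1.dim Z0"
    using vs1.finitely_spanned_basis vs1.finitely_spanned_subset assms(1,2) by metis
  obtain b where b: "b0 \<subseteq> b" "b \<subseteq> S0" "vs1.independent b" "S0 \<subseteq> vs1.span b"
    using vs1.maximal_independent_subset_extend[of b0 S0] b0 assms(1) by blast
  have fin_b: "finite b" "card b \<le> vs1.dim S0"
    using vs1.independent_card_le_dim_finitely_spanned[OF b(3,2) assms(2)] by auto
  obtain bZ where bZ: "Z1 \<subseteq> vs2.span bZ" "finite bZ" "card bZ = vs2.dim Z1"
    using vs2.finitely_spanned_basis[OF assms(3)] by metis
  let ?C = "f ` (b - b0) \<union> bZ"
  have "f ` Z0 \<subseteq> vs2.span ?C"
    using assms(4) vs2.span_mono[of bZ ?C] vs2.span_minimal[OF bZ(1)] by blast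
  then have "vs2.span (f ` b0) \<subseteq> vs2.span ?C"
    using b0(1) by (meson image_mono order_trans vs2.span_minimal vs2.subspace_span)
  then have b0C: "f ` vs1.span b0 \<subseteq> vs2.span ?C"
    by (simp add: span_image)
  have "f ` vs1.span (b - b0) \<subseteq> vs2.span ?C"
    using span_image vs2.span_mono[of "f ` (b - b0)" ?C] by auto
  with b0C have "f ` vs1.span b \<subseteq> vs2.span ?C"
    using vs1.span_Un[of b0 "b - b0"] b(1) vs2.span_add by (auto simp: Un_absorb1 add image_subset_iff)
  then have "f ` S0 \<union> Z1 \<subseteq> vs2.span ?C"
    using b(4) bZ(1) vs2.span_mono[of bZ ?C] by blast
  then have "S1 \<subseteq> vs2.span ?C"
    using assms(5) vs2.span_minimal[of "f ` S0 \<union> Z1"] by blast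
  then have "vs2.dim S1 \<le> card ?C"
    using vs2.dim_le_card fin_b(1) bZ(2) by blast
  also have "\<dots> \<le> card (b - b0) + card bZ"
    using card_Un_le card_image_le fin_b(1) by (meson add_le_mono1 finite_Diff le_trans)
  also have "card (b - b0) = card b - card b0"
    using card_Diff_subset b(1) b0(4) by blast
  finally show ?thesis
    using fin_b b0(5) bZ(3) card_mono[OF fin_b(1) b(1)] by linarith
qed

end

section \<open>Finitely supported vectors\<close>

definition scale_fun :: "('k \<Rightarrow> 'b \<Rightarrow> 'b) \<Rightarrow> 'k \<Rightarrow> ('i \<Rightarrow> 'b) \<Rightarrow> 'i \<Rightarrow> 'b" where
  "scale_fun s c f = (\<lambda>i. s c (f i))"

lemma vector_space_scale_fun: "vector_space s \<Longrightarrow> vector_space (scale_fun s)"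
  unfolding vector_space_def scale_fun_def by (auto simp: fun_eq_iff)

definition Pi0 :: "nat \<Rightarrow> (nat \<Rightarrow> 'b set) \<Rightarrow> (nat \<Rightarrow> 'b::zero) set" where
  "Pi0 n S = {f. (\<forall>i<n. f i \<in> S i) \<and> (\<forall>i\<ge>n. f i = 0)}"

definition single :: "nat \<Rightarrow> 'b::zero \<Rightarrow> nat \<Rightarrow> 'b" where
  "single n x = (\<lambda>i. if i = n then x else 0)"

lemma Pi0_Suc:
  "Pi0 (Suc n) S = {f + single n x | f x. f \<in> Pi0 n S \<and> x \<in> S n}" (is "?L = ?R")
  if "0 \<in> S n" for S :: "nat \<Rightarrow> ('b::comm_monoid_add) set"
proof
  show "?L \<subseteq> ?R"
  proof
    fix f assume f: "f \<in> ?L"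
    have "f = f(n := 0) + single n (f n)"
      unfolding single_def by (auto simp: fun_eq_iff)
    moreover have "f(n := 0) \<in> Pi0 n S" "f n \<in> S n"
      using f unfolding Pi0_def by auto
    ultimately show "f \<in> ?R" by blast
  qed
  show "?R \<subseteq> ?L"
    using that unfolding Pi0_def single_def by (auto simp: less_Suc_eq)
qed

lemma Pi0_image:
  assumes "g 0 = 0"
  shows "(\<lambda>c i. g (c i)) ` Pi0 n S = Pi0 n (\<lambda>i. g ` S i)"
proof
  show "(\<lambda>c i. g (c i)) ` Pi0 n S \<subseteq> Pi0 n (\<lambda>i. g ` S i)"
    using assms unfolding Pi0_def by auto
  show "Pi0 n (\<lambda>i. g ` S i) \<subseteq> (\<lambda>c i. g (c i)) ` Pi0 n S"
  proof
    fix d assume d: "d \<in> Pi0 n (\<lambda>i. g ` S i)"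
    then have "\<forall>i<n. \<exists>x. x \<in> S i \<and> d i = g x"
      unfolding Pi0_def by blast
    then obtain c where c: "\<forall>i<n. c i \<in> S i \<and> d i = g (c i)"
      by metis
    define c' where "c' i = (if i < n then c i else 0)" for i
    have "c' \<in> Pi0 n S" and "d = (\<lambda>i. g (c' i))"
      using c d assms unfolding Pi0_def c'_def by (auto simp: fun_eq_iff)
    then show "d \<in> (\<lambda>c i. g (c i)) ` Pi0 n S" by blast
  qed
qed

lemma dim_Pi0:
  assumes vs: "vector_space s"
    and S: "\<forall>i<n. module.subspace s (S i) \<and> vector_space.finitely_spanned s (S i)"
  shows "module.subspace (scale_fun s) (Pi0 n S)"
    and "vector_space.finitely_spanned (scale_fun s) (Pi0 n S)"
    and "vector_space.dim (scale_fun s) (Pi0 n S) = (\<Sum>i<n. vector_space.dim s (S i))"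
proof -
  interpret V: vector_space s by (rule vs)
  interpret F: vector_space "scale_fun s" by (rule vector_space_scale_fun[OF vs])
  have "F.subspace (Pi0 n S) \<and> F.finitely_spanned (Pi0 n S)
      \<and> F.dim (Pi0 n S) = (\<Sum>i<n. V.dim (S i))"
    using S
  proof (induction n)
    case 0
    have "Pi0 0 S = {0}"
      unfolding Pi0_def by auto
    moreover have "F.finitely_spanned {0}"
      unfolding F.finitely_spanned_def by (rule exI[of _ "{}"]) simp
    ultimately show ?case
      using F.dim_zero_space F.subspace_single_0 by simp
  next
    case (Suc n)
    have Sn: "V.subspace (S n)" "V.finitely_spanned (S n)"
      using Suc.prems by auto
    interpret L: Vector_Spaces.linear s "scale_fun s" "single n"
      using vs vector_space_scale_fun[OF vs] unfolding Vector_Spaces.linear_iff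
      by (auto simp: single_def scale_fun_def fun_eq_iff V.scale_right_distrib)
    have "inj_on (single n) (V.span (S n))"
      unfolding inj_on_def single_def by (auto simp: fun_eq_iff dest: spec[of _ n])
    then have single_dims: "F.finitely_spanned (single n ` S n)" "F.dim (single n ` S n) = V.dim (S n)"
      using L.finitely_spanned_image L.dim_image_eq_finitely_spanned Sn(2) by auto
    have "Pi0 n S \<inter> single n ` S n \<subseteq> {0}"
      unfolding Pi0_def single_def by (auto simp: fun_eq_iff)
    moreover have "Pi0 (Suc n) S = {f + g | f g. f \<in> Pi0 n S \<and> g \<in> single n ` S n}"
      using Pi0_Suc[of S n] V.subspace_0[OF Sn(1)] by blast
    ultimately show ?case
      using F.dim_direct_sum[of "Pi0 n S" "single n ` S n"] F.subspace_sums[of "Pi0 n S" "single n ` S n"]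
        Suc L.subspace_image[OF Sn(1)] single_dims by auto
  qed
  then show "F.subspace (Pi0 n S)" "F.finitely_spanned (Pi0 n S)"
    "F.dim (Pi0 n S) = (\<Sum>i<n. V.dim (S i))" by auto
qed

section \<open>Matrices over \<open>\<Lambda>\<close> and the corners \<open>e \<Lambda> e'\<close>\<close>

lemma mmul_assoc: "mmul n (mmul m A B) C = mmul m A (mmul n B C)"
  unfolding mmul_def
  by (intro ext) (simp add: sum_distrib_left sum_distrib_right mult.assoc sum.swap[where A="{..<n}"])

lemma mmul_add_left: "mmul n (A + B) C = mmul n A C + mmul n B C"
  unfolding mmul_def by (simp add: fun_eq_iff distrib_right sum.distrib)

lemma mmul_add_right: "mmul n A (B + C) = mmul n A B + mmul n A C"
  unfolding mmul_def by (simp add: fun_eq_iff distrib_left sum.distrib)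

lemma mmul_neg_left: "mmul n (- A) C = - mmul n A C"
  unfolding mmul_def by (simp add: fun_eq_iff sum_negf)

lemma mmul_neg_right: "mmul n A (- C) = - mmul n A C"
  unfolding mmul_def by (simp add: fun_eq_iff sum_negf)

lemma mmul_zero_left [simp]: "mmul n 0 C = 0"
  and mmul_zero_right [simp]: "mmul n A 0 = 0"
  unfolding mmul_def by (simp_all add: fun_eq_iff)

lemma mmul_0 [simp]: "mmul 0 A B = 0"
  unfolding mmul_def by (simp add: fun_eq_iff)

lemma mmul_1_00: "mmul 1 A B 0 0 = A 0 0 * B 0 0"
  unfolding mmul_def by simp

lemma madd_eq_plus: "madd M N = M + N"
  by (simp add: madd_def fun_eq_iff)

lemma msub_eq_minus: "msub M N = M - N"
  by (simp add: msub_def fun_eq_iff)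

lemma corner_iff: "x \<in> corner a b \<longleftrightarrow> (\<exists>u. x = a * u * b)"
  unfolding corner_def by blast

lemma corner_zero [simp]: "0 \<in> corner a b"
  unfolding corner_iff by (rule exI[of _ 0]) simp

lemma corner_mult: "x \<in> corner a b \<Longrightarrow> y \<in> corner b c \<Longrightarrow> x * y \<in> corner a c"
  unfolding corner_iff by (metis mult.assoc)

lemma corner_add: "x \<in> corner a b \<Longrightarrow> y \<in> corner a b \<Longrightarrow> x + y \<in> corner a b"
  unfolding corner_iff by (metis distrib_left distrib_right)

lemma corner_uminus: "x \<in> corner a b \<Longrightarrow> - x \<in> corner a b"
  unfolding corner_iff by (metis mult_minus_left mult_minus_right)

lemma corner_sum: "(\<And>i. i \<in> I \<Longrightarrow> f i \<in> corner a b) \<Longrightarrow> sum f I \<in> corner a b"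
  by (induction I rule: infinite_finite_induct) (auto intro: corner_add)

lemma idem_mult_corner: "idem a \<Longrightarrow> x \<in> corner a b \<Longrightarrow> a * x = x"
  and corner_mult_idem: "idem b \<Longrightarrow> x \<in> corner a b \<Longrightarrow> x * b = x"
  unfolding corner_iff idem_def by (auto simp: mult.assoc[symmetric])
    (metis mult.assoc)

lemma homI:
  "(\<And>p q. p < length ys \<Longrightarrow> q < length xs \<Longrightarrow> M p q \<in> corner (ys!p) (xs!q)) \<Longrightarrow>
   (\<And>p q. \<not> (p < length ys \<and> q < length xs) \<Longrightarrow> M p q = 0) \<Longrightarrow> M \<in> hom xs ys"
  unfolding hom_def by blast

lemma hom_entry: "M \<in> hom xs ys \<Longrightarrow> p < length ys \<Longrightarrow> q < length xs \<Longrightarrow> M p q \<in> corner (ys!p) (xs!q)"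
  and hom_entry_zero: "M \<in> hom xs ys \<Longrightarrow> \<not> (p < length ys \<and> q < length xs) \<Longrightarrow> M p q = 0"
  unfolding hom_def by blast+

lemma mmul_hom: "A \<in> hom ys zs \<Longrightarrow> B \<in> hom xs ys \<Longrightarrow> mmul (length ys) A B \<in> hom xs zs"
  unfolding mmul_def
  by (rule homI) (auto intro!: corner_sum intro: corner_mult hom_entry simp: hom_entry_zero)

lemma hom_add: "A \<in> hom xs ys \<Longrightarrow> B \<in> hom xs ys \<Longrightarrow> A + B \<in> hom xs ys"
  by (rule homI) (auto intro: corner_add hom_entry simp: hom_entry_zero)

lemma hom_uminus: "A \<in> hom xs ys \<Longrightarrow> - A \<in> hom xs ys"
  by (rule homI) (auto intro: corner_uminus hom_entry simp: hom_entry_zero)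

lemma hom_zero [simp]: "0 \<in> hom xs ys"
  by (rule homI) auto

text \<open>\<open>idm xs\<close> is the identity of \<open>\<Oplus>\<^sub>q xs!q \<Lambda>\<close> only when all \<open>xs!q\<close> are idempotent.\<close>

lemma idm_hom: "\<forall>x\<in>set xs. idem x \<Longrightarrow> idm xs \<in> hom xs xs"
proof (rule homI)
  fix p q assume "\<forall>x\<in>set xs. idem x" "p < length xs" "q < length xs"
  then show "idm xs p q \<in> corner (xs!p) (xs!q)"
    unfolding idm_def corner_iff idem_def by (metis mult.right_neutral nth_mem corner_zero corner_iff)
qed (auto simp: idm_def)

lemma mmul_idm_left:
  assumes "\<forall>x\<in>set ys. idem x" "M \<in> hom xs ys"
  shows "mmul (length ys) (idm ys) M = M"
proof -
  have "mmul (length ys) (idm ys) M p q = M p q" for p q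
  proof (cases "p < length ys \<and> q < length xs")
    case True
    have "mmul (length ys) (idm ys) M p q = (\<Sum>k<length ys. if k = p then ys!p * M p q else 0)"
      unfolding mmul_def idm_def by (rule sum.cong) auto
    also have "\<dots> = ys!p * M p q"
      using True by simp
    also have "\<dots> = M p q"
      using True assms(1) by (intro idem_mult_corner[OF _ hom_entry[OF assms(2)]]) auto
    finally show ?thesis .
  next
    case False
    then show ?thesis
      using assms(2) unfolding mmul_def idm_def by (auto simp: hom_entry_zero)
  qed
  then show ?thesis by (simp add: fun_eq_iff)
qed

lemma mmul_idm_right:
  assumes "\<forall>x\<in>set xs. idem x" "M \<in> hom xs ys"
  shows "mmul (length xs) M (idm xs) = M"
proof -
  have "mmul (length xs) M (idm xs) p q = M p q" for p q
  proof (cases "p < length ys \<and> q < length xs")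
    case True
    have "mmul (length xs) M (idm xs) p q = (\<Sum>k<length xs. if k = q then M p q * xs!q else 0)"
      unfolding mmul_def idm_def by (rule sum.cong) auto
    also have "\<dots> = M p q * xs!q"
      using True by simp
    also have "\<dots> = M p q"
      using True assms(1) by (intro corner_mult_idem[OF _ hom_entry[OF assms(2)]]) auto
    finally show ?thesis .
  next
    case False
    then show ?thesis
      using assms(2) unfolding mmul_def idm_def by (auto simp: hom_entry_zero)
  qed
  then show ?thesis by (simp add: fun_eq_iff)
qed

lemma sum_lessThan_add: "(\<Sum>k<(m::nat) + n. f k) = (\<Sum>k<m. f k) + (\<Sum>k<n. f (m + k))"
  by (induction n) (auto simp: add.assoc)

definition block :: "nat \<Rightarrow> nat \<Rightarrow> nat \<Rightarrow> nat \<Rightarrow> 'a::zero mat \<Rightarrow> 'a mat" where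
  "block r c nr nc M = (\<lambda>p q. if p < nr \<and> q < nc then M (r + p) (c + q) else 0)"

definition embed :: "nat \<Rightarrow> nat \<Rightarrow> 'a::zero mat \<Rightarrow> 'a mat" where
  "embed r c M = (\<lambda>p q. if r \<le> p \<and> c \<le> q then M (p - r) (q - c) else 0)"

definition sublist_at :: "'a list \<Rightarrow> nat \<Rightarrow> 'a list \<Rightarrow> bool" where
  "sublist_at ys r xs \<longleftrightarrow> r + length xs \<le> length ys \<and> (\<forall>p<length xs. ys ! (r + p) = xs ! p)"

lemma sublist_at_self: "sublist_at xs 0 xs"
  unfolding sublist_at_def by simp

lemma sublist_at_append: "sublist_at (xs @ ys) 0 xs" "sublist_at (xs @ ys) (length xs) ys"
  unfolding sublist_at_def by (auto simp: nth_append)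

lemma block_add: "block r c nr nc (A + B :: 'a::ring_1 mat) = block r c nr nc A + block r c nr nc B"
  and block_uminus: "block r c nr nc (- A :: 'a::ring_1 mat) = - block r c nr nc A"
  unfolding block_def by (simp_all add: fun_eq_iff)

lemma block_id: "M \<in> hom xs ys \<Longrightarrow> block 0 0 (length ys) (length xs) M = M"
  unfolding block_def by (auto simp: fun_eq_iff hom_entry_zero)

lemma block_embed: "M \<in> hom xs ys \<Longrightarrow> block r c (length ys) (length xs) (embed r c M) = M"
  unfolding block_def embed_def by (auto simp: fun_eq_iff hom_entry_zero)

lemma block_hom:
  assumes "M \<in> hom xs ys" "sublist_at ys r ys'" "sublist_at xs c xs'"
  shows "block r c (length ys') (length xs') M \<in> hom xs' ys'"
proof (rule homI)
  fix p q assume "p < length ys'" "q < length xs'"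
  then show "block r c (length ys') (length xs') M p q \<in> corner (ys'!p) (xs'!q)"
    using assms hom_entry[OF assms(1), of "r + p" "c + q"] unfolding sublist_at_def block_def by auto
qed (auto simp: block_def)

lemma embed_hom:
  assumes "M \<in> hom xs' ys'" "sublist_at ys r ys'" "sublist_at xs c xs'"
  shows "embed r c M \<in> hom xs ys"
proof (rule homI)
  fix p q
  show "embed r c M p q \<in> corner (ys!p) (xs!q)" if "p < length ys" "q < length xs"
  proof (cases "r \<le> p \<and> c \<le> q \<and> p - r < length ys' \<and> q - c < length xs'")
    case True
    then have "ys ! p = ys' ! (p - r)" "xs ! q = xs' ! (q - c)"
      using assms(2,3) unfolding sublist_at_def by (metis le_add_diff_inverse)+
    then show ?thesis
      using True hom_entry[OF assms(1), of "p - r" "q - c"] unfolding embed_def by simp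
  next
    case False
    then show ?thesis
      using hom_entry_zero[OF assms(1), of "p - r" "q - c"] unfolding embed_def by auto
  qed
  show "embed r c M p q = 0" if "\<not> (p < length ys \<and> q < length xs)"
  proof (cases "r \<le> p \<and> c \<le> q")
    case True
    then have "\<not> (p - r < length ys' \<and> q - c < length xs')"
      using that assms(2,3) unfolding sublist_at_def by auto
    then show ?thesis
      using True hom_entry_zero[OF assms(1)] unfolding embed_def by auto
  qed (auto simp: embed_def)
qed

lemma block_mmul:
  assumes "i + n \<le> N"
    and "\<And>p q k. p < nr \<Longrightarrow> q < nc \<Longrightarrow> k < N \<Longrightarrow> k < i \<or> i + n \<le> k \<Longrightarrow> A (r + p) k * B k (c + q) = 0"
  shows "block r c nr nc (mmul N A B) = mmul n (block r i nr n A) (block i c n nc B)"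
proof -
  have "block r c nr nc (mmul N A B) p q = mmul n (block r i nr n A) (block i c n nc B) p q" for p q
  proof (cases "p < nr \<and> q < nc")
    case True
    define f where "f k = A (r + p) k * B k (c + q)" for k
    obtain j where N: "N = i + n + j"
      using assms(1) le_Suc_ex by blast
    have "mmul N A B (r + p) (c + q) = (\<Sum>k<i. f k) + (\<Sum>k<n. f (i + k)) + (\<Sum>k<j. f (i + n + k))"
      unfolding mmul_def f_def N sum_lessThan_add by simp
    also have "(\<Sum>k<i. f k) = 0"
      using assms(2) True N unfolding f_def by (auto intro!: sum.neutral)
    also have "(\<Sum>k<j. f (i + n + k)) = 0"
      using assms(2) True N unfolding f_def by (auto intro!: sum.neutral)
    finally show ?thesis
      using True unfolding block_def mmul_def f_def by simp
  next
    case False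
    then show ?thesis unfolding block_def mmul_def by auto
  qed
  then show ?thesis by (simp add: fun_eq_iff)
qed

lemma block_rows_mmul:
  "B \<in> hom xs ys \<Longrightarrow> block r 0 nr (length xs) (mmul (length ys) A B) = mmul (length ys) (block r 0 nr (length ys) A) B"
  by (subst block_mmul[where i = 0 and n = "length ys"]) (auto simp: block_id hom_entry_zero)

lemma block_cols_mmul:
  "A \<in> hom xs ys \<Longrightarrow> block 0 c (length ys) nc (mmul (length xs) A B) = mmul (length xs) A (block 0 c (length xs) nc B)"
  by (subst block_mmul[where i = 0 and n = "length xs"]) (auto simp: block_id hom_entry_zero)

lemma block_zero [simp]: "block r c nr nc 0 = 0"
  unfolding block_def by (simp add: fun_eq_iff)

lemma block_idm: "sublist_at xs c ys \<Longrightarrow> block c c (length ys) (length ys) (idm xs) = idm ys"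
  unfolding sublist_at_def block_def idm_def by (auto simp: fun_eq_iff)

lemma block_mmul_1: "block r c nr nc (mmul 1 A B) = mmul 1 (block r 0 nr 1 A) (block 0 c 1 nc B)"
  by (rule block_mmul) auto

lemma mmul_add_00:
  "mmul (m + n) g f 0 0
    = mmul m (block 0 0 1 m g) (block 0 0 m 1 f) 0 0 + mmul n (block 0 m 1 n g) (block m 0 n 1 f) 0 0"
  unfolding mmul_def block_def sum_lessThan_add by simp

definition mat_cols :: "'a mat \<Rightarrow> 'a mat" where
  "mat_cols M = (\<lambda>q p. M p q)"

lemma mat_cols_mat_cols [simp]: "mat_cols (mat_cols M) = M"
  by (simp add: mat_cols_def)

lemma image_mat_cols_iff: "M \<in> mat_cols ` X \<longleftrightarrow> mat_cols M \<in> X"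
  by (metis mat_cols_mat_cols image_iff)

text \<open>\<open>col_space Q f\<close> is \<open>Hom(f \<Lambda>, \<Oplus>\<^sub>p Q!p \<Lambda>) = \<Oplus>\<^sub>p (Q!p) \<Lambda> f\<close>, as column vectors.\<close>

definition col_space :: "'a::ring_1 list \<Rightarrow> 'a \<Rightarrow> (nat \<Rightarrow> 'a) set" where
  "col_space Q f = Pi0 (length Q) (\<lambda>p. corner (Q!p) f)"

lemma hom_eq_mat_cols_Pi0: "hom P Q = mat_cols ` Pi0 (length P) (\<lambda>q. col_space Q (P!q))"
  unfolding image_mat_cols_iff set_eq_iff
  by (auto simp: hom_def Pi0_def col_space_def mat_cols_def fun_eq_iff) (metis not_le)

definition mulv :: "'a::ring_1 mat \<Rightarrow> nat \<Rightarrow> (nat \<Rightarrow> 'a) \<Rightarrow> nat \<Rightarrow> 'a" where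
  "mulv D n c = (\<lambda>p. \<Sum>r<n. D p r * c r)"

lemma mmul_eq_mat_cols_mulv: "mmul n D t = mat_cols (\<lambda>q. mulv D n (mat_cols t q))"
  by (simp add: mmul_def mulv_def mat_cols_def)

section \<open>Maps \<open>T \<rightarrow> U[1]\<close> and a dimension count\<close>

text \<open>\<open>hom_shift_zero T U\<close> says \<open>Hom(T, U[1]) = 0\<close> in \<open>K\<^sup>b(proj \<Lambda>)\<close>.\<close>

definition hom_shift_zero :: "'a::ring_1 cx \<Rightarrow> 'a cx \<Rightarrow> bool" where
  "hom_shift_zero T U \<longleftrightarrow> (\<forall>h\<in>hom (src T) (tgt U). \<exists>s\<in>hom (tgt T) (tgt U). \<exists>t\<in>hom (src T) (src U).
      h = madd (mmul (length (tgt T)) s (dif T)) (mmul (length (src U)) (dif U) t))"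

lemma presilting_iff_hom_shift_zero: "presilting T \<longleftrightarrow> hom_shift_zero T T"
  unfolding presilting_def hom_shift_zero_def ..

definition hom_through :: "'a::ring_1 mat \<Rightarrow> 'a list \<Rightarrow> 'a list \<Rightarrow> 'a mat set" where
  "hom_through D Q1 P = (\<lambda>t. mmul (length Q1) D t) ` hom P Q1"

lemma hom_through_eq_mat_cols_Pi0:
  "hom_through D Q1 P = mat_cols ` Pi0 (length P) (\<lambda>q. mulv D (length Q1) ` col_space Q1 (P!q))"
proof -
  have "mulv D (length Q1) 0 = 0"
    by (simp add: mulv_def fun_eq_iff)
  then have "(\<lambda>c q. mulv D (length Q1) (c q)) ` Pi0 (length P) (\<lambda>q. col_space Q1 (P!q))
      = Pi0 (length P) (\<lambda>q. mulv D (length Q1) ` col_space Q1 (P!q))"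
    by (rule Pi0_image[of "mulv D (length Q1)" "length P" "\<lambda>q. col_space Q1 (P!q)"])
  then show ?thesis
    unfolding hom_through_def hom_eq_mat_cols_Pi0 image_image mmul_eq_mat_cols_mulv
    by (simp add: image_image[symmetric, of mat_cols "\<lambda>c q. mulv D (length Q1) (c q)"])
qed

lemma sum_over_two_idems:
  assumes "set P \<subseteq> {e, e'}" "e \<noteq> e'"
  shows "(\<Sum>q<length P. g (P!q)) = mult e P * g e + mult e' P * g e'"
  using assms(1)
proof (induction P)
  case Nil
  then show ?case by (simp add: mult_def)
next
  case (Cons x P)
  have "(\<Sum>q<length (x # P). g ((x # P)!q)) = g x + (\<Sum>q<length P. g (P!q))"
    by (simp only: length_Cons sum.lessThan_Suc_shift nth_Cons_0 nth_Cons_Suc)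
  then show ?case
    using Cons assms(2) by (auto simp: mult_def algebra_simps)
qed

lemma le_if_cross_mult_le:
  fixes m0 m1 u u' :: nat
  assumes "m1 * u + m0 * u' \<le> m0 * u + m1 * u'" "m0 < m1"
  shows "u \<le> u'"
proof (rule ccontr)
  assume "\<not> u \<le> u'"
  then obtain k where k: "u = Suc (u' + k)"
    using less_imp_Suc_add[of u' u] by auto
  obtain d where d: "m1 = Suc (m0 + d)"
    using less_imp_Suc_add assms(2) by blast
  show False
    using assms(1) unfolding k d by (simp add: algebra_simps)
qed

locale fin_dim_algebra =
  fixes sc :: "'k::field \<Rightarrow> 'a::ring_1 \<Rightarrow> 'a"
  assumes fd_algebra: "fd_algebra sc"

begin

sublocale A: vector_space sc
  using fd_algebra unfolding fd_algebra_def by blast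

sublocale V: vector_space "scale_fun sc"
  by (rule vector_space_scale_fun[OF A.vector_space_axioms])

sublocale M: vector_space "scale_fun (scale_fun sc)"
  by (rule vector_space_scale_fun[OF V.vector_space_axioms])

lemma scale_mult_left: "sc c (x * y) = sc c x * y"
  and scale_mult_right: "sc c (x * y) = x * sc c y"
  using fd_algebra unfolding fd_algebra_def by blast+

lemma finitely_spanned: "A.finitely_spanned S"
  using fd_algebra unfolding fd_algebra_def A.finitely_spanned_def by blast

lemma scale_corner: "x \<in> corner a b \<Longrightarrow> sc c x \<in> corner a b"
  unfolding corner_iff by (metis scale_mult_left scale_mult_right)

lemma subspace_corner: "A.subspace (corner a b)"
  unfolding A.subspace_def by (auto intro: corner_add scale_corner)

lemma col_space_dims:
  shows "V.subspace (col_space Q f)" "V.finitely_spanned (col_space Q f)"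
    and "V.dim (col_space Q f) = (\<Sum>p<length Q. A.dim (corner (Q!p) f))"
  unfolding col_space_def
  by (rule dim_Pi0[OF A.vector_space_axioms], simp add: subspace_corner finitely_spanned)+

lemma mat_cols_Pi0_dims:
  assumes "\<forall>q<n. V.subspace (S q) \<and> V.finitely_spanned (S q)"
  shows "M.finitely_spanned (mat_cols ` Pi0 n S)"
    and "M.dim (mat_cols ` Pi0 n S) = (\<Sum>q<n. V.dim (S q))"
proof -
  interpret C: Vector_Spaces.linear "scale_fun (scale_fun sc)" "scale_fun (scale_fun sc)" mat_cols
    unfolding Vector_Spaces.linear_iff
    using M.vector_space_axioms by (auto simp: mat_cols_def scale_fun_def fun_eq_iff)
  have inj: "inj_on mat_cols X" for X
    by (metis inj_onI mat_cols_mat_cols)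
  note Pi0_dims = dim_Pi0[OF V.vector_space_axioms assms]
  show "M.finitely_spanned (mat_cols ` Pi0 n S)"
    using C.finitely_spanned_image[OF Pi0_dims(2)] .
  show "M.dim (mat_cols ` Pi0 n S) = (\<Sum>q<n. V.dim (S q))"
    using C.dim_image_eq_finitely_spanned[OF Pi0_dims(2) inj] Pi0_dims(3) by simp
qed

lemma hom_dims:
  shows "M.finitely_spanned (hom P Q)"
    and "M.dim (hom P Q) = (\<Sum>q<length P. V.dim (col_space Q (P!q)))"
  unfolding hom_eq_mat_cols_Pi0 using mat_cols_Pi0_dims col_space_dims by auto

lemma linear_mulv: "Vector_Spaces.linear (scale_fun sc) (scale_fun sc) (mulv D n)"
  unfolding Vector_Spaces.linear_iff using V.vector_space_axioms
  by (auto simp: mulv_def scale_fun_def fun_eq_iff distrib_left sum.distrib A.scale_sum_right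
      scale_mult_right)

lemma image_mulv_col_space_dims:
  shows "V.subspace (mulv D n ` col_space Q f)" "V.finitely_spanned (mulv D n ` col_space Q f)"
    and "V.dim (mulv D n ` col_space Q f) \<le> V.dim (col_space Q f)"
proof -
  interpret L: Vector_Spaces.linear "scale_fun sc" "scale_fun sc" "mulv D n"
    by (rule linear_mulv)
  show "V.subspace (mulv D n ` col_space Q f)"
    using L.subspace_image[OF col_space_dims(1)] .
  show "V.finitely_spanned (mulv D n ` col_space Q f)"
    using L.finitely_spanned_image[OF col_space_dims(2)] .
  show "V.dim (mulv D n ` col_space Q f) \<le> V.dim (col_space Q f)"
    using L.dim_image_le_finitely_spanned[OF col_space_dims(2)] .
qed

lemma hom_through_dims:
  shows "M.finitely_spanned (hom_through D Q1 P)"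
    and "M.dim (hom_through D Q1 P) = (\<Sum>q<length P. V.dim (mulv D (length Q1) ` col_space Q1 (P!q)))"
  unfolding hom_through_eq_mat_cols_Pi0 using mat_cols_Pi0_dims image_mulv_col_space_dims by auto

text \<open>\<open>Hom(T\<^sup>-\<^sup>1, U\<^sup>0)\<close> is spanned by the maps \<open>s d\<^sub>T\<close> modulo the maps factoring through \<open>d\<^sub>U\<close>.\<close>

lemma dim_hom_le_if_hom_shift_zero:
  assumes dT: "dif T \<in> hom (src T) (tgt T)" and dU: "dif U \<in> hom (src U) (tgt U)"
    and "hom_shift_zero T U"
  shows "M.dim (hom (src T) (tgt U)) + M.dim (hom_through (dif U) (src U) (tgt T))
    \<le> M.dim (hom (tgt T) (tgt U)) + M.dim (hom_through (dif U) (src U) (src T))"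
proof -
  let ?L = "\<lambda>s. mmul (length (tgt T)) s (dif T)"
  let ?R = "\<lambda>t. mmul (length (src U)) (dif U) t"
  interpret L: Vector_Spaces.linear "scale_fun (scale_fun sc)" "scale_fun (scale_fun sc)" ?L
    unfolding Vector_Spaces.linear_iff using M.vector_space_axioms
    by (auto simp: mmul_def scale_fun_def fun_eq_iff distrib_right sum.distrib A.scale_sum_right
        scale_mult_left)
  have "?L ` hom_through (dif U) (src U) (tgt T) \<subseteq> hom_through (dif U) (src U) (src T)"
    unfolding hom_through_def using dT by (auto simp: mmul_assoc intro: mmul_hom)
  then have image: "?L ` hom_through (dif U) (src U) (tgt T) \<subseteq> M.span (hom_through (dif U) (src U) (src T))"
    using M.span_superset by blast
  have span: "hom (src T) (tgt U)
      \<subseteq> M.span (?L ` hom (tgt T) (tgt U) \<union> hom_through (dif U) (src U) (src T))"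
  proof
    fix h assume "h \<in> hom (src T) (tgt U)"
    then obtain s t where "s \<in> hom (tgt T) (tgt U)" "t \<in> hom (src T) (src U)" "h = ?L s + ?R t"
      using assms(3) unfolding hom_shift_zero_def madd_eq_plus by blast
    moreover have "?R t \<in> hom_through (dif U) (src U) (src T)"
      unfolding hom_through_def using calculation(2) by blast
    ultimately show "h \<in> M.span (?L ` hom (tgt T) (tgt U) \<union> hom_through (dif U) (src U) (src T))"
      by (auto intro: M.span_add M.span_base)
  qed
  have "hom_through (dif U) (src U) (tgt T) \<subseteq> hom (tgt T) (tgt U)"
    unfolding hom_through_def using dU by (auto intro: mmul_hom)
  then show ?thesis
    by (rule L.dim_le_of_spanning_modulo[OF _ hom_dims(1) hom_through_dims(1) image span])
qed

lemma corner_eq_0_if_hom_shift_zero: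
  fixes e e' :: 'a and T U :: "'a cx"
  assumes "e \<noteq> e'" and T: "is_cx e e' T" and U: "is_cx e e' U" and "hom_shift_zero T U"
    and mT: "mult e (tgt T) < mult e (src T)" "mult e' (tgt T) = mult e' (src T)"
    and mU: "mult e (tgt U) = mult e (src U)" "mult e' (src U) < mult e' (tgt U)"
  shows "corner e' e = {0}"
proof -
  define a where "a f g = A.dim (corner f g)" for f g
  define u where "u f = V.dim (col_space (tgt U) f)" for f
  define u' where "u' f = V.dim (mulv (dif U) (length (src U)) ` col_space (src U) f)" for f
  \<comment> \<open>\<open>u f - u' f\<close> is the dimension of \<open>Hom(f \<Lambda>, coker d\<^sub>U)\<close>.\<close>
  have two: "(\<Sum>q<length P. g (P!q)) = mult e P * g e + mult e' P * g e'"
    if "set P \<subseteq> {e, e'}" for P and g :: "'a \<Rightarrow> nat"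
    using sum_over_two_idems[OF that assms(1)] .
  have dim_col_space: "V.dim (col_space Q f) = mult e Q * a e f + mult e' Q * a e' f"
    if "set Q \<subseteq> {e, e'}" for Q f
    unfolding col_space_dims a_def using two[OF that] .
  have dim_hom: "M.dim (hom P (tgt U)) = mult e P * u e + mult e' P * u e'"
    and dim_hom_through: "M.dim (hom_through (dif U) (src U) P) = mult e P * u' e + mult e' P * u' e'"
    if "set P \<subseteq> {e, e'}" for P
    unfolding hom_dims hom_through_dims u_def u'_def using two[OF that] by simp_all
  have T': "set (src T) \<subseteq> {e, e'}" "set (tgt T) \<subseteq> {e, e'}" "dif T \<in> hom (src T) (tgt T)"
    and U': "set (src U) \<subseteq> {e, e'}" "set (tgt U) \<subseteq> {e, e'}" "dif U \<in> hom (src U) (tgt U)"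
    using T U unfolding is_cx_def by auto
  have "mult e (src T) * u e + mult e' (src T) * u e' + (mult e (tgt T) * u' e + mult e' (tgt T) * u' e')
      \<le> mult e (tgt T) * u e + mult e' (tgt T) * u e' + (mult e (src T) * u' e + mult e' (src T) * u' e')"
    using dim_hom_le_if_hom_shift_zero[OF T'(3) U'(3) assms(4)]
    unfolding dim_hom[OF T'(1)] dim_hom[OF T'(2)] dim_hom_through[OF T'(1)] dim_hom_through[OF T'(2)] .
  then have "mult e (src T) * u e + mult e (tgt T) * u' e \<le> mult e (tgt T) * u e + mult e (src T) * u' e"
    unfolding mT(2) by linarith
  then have "u e \<le> u' e"
    using mT(1) by (rule le_if_cross_mult_le)
  also have "u' e \<le> mult e (src U) * a e e + mult e' (src U) * a e' e"
    unfolding u'_def dim_col_space[OF U'(1), symmetric] by (rule image_mulv_col_space_dims(3))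
  finally have "mult e' (tgt U) * a e' e \<le> mult e' (src U) * a e' e"
    unfolding u_def dim_col_space[OF U'(2)] mU(1) by linarith
  then have "A.dim (corner e' e) = 0"
    using mU(2) unfolding a_def by (meson leD mult_le_cancel2 neq0_conv)
  then show ?thesis
    using A.finitely_spanned_dim_eq_0[OF finitely_spanned] by auto
qed

end

section \<open>Direct summands of 2-term complexes\<close>

lemma zero_cx_simps [simp]: "src zero_cx = []" "tgt zero_cx = []" "dif zero_cx = 0"
  unfolding zero_cx_def src_def tgt_def dif_def by (simp_all add: fun_eq_iff)

definition wf_cx :: "'a::ring_1 cx \<Rightarrow> bool" where
  "wf_cx T \<longleftrightarrow> dif T \<in> hom (src T) (tgt T)"

text \<open>\<open>Y\<close> sits in \<open>W\<close> as a direct summand, with \<open>Y\<^sup>0\<close> at row offset \<open>r\<close>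
  and \<open>Y\<^sup>-\<^sup>1\<close> at column offset \<open>c\<close> of the differential.\<close>

definition summand_at :: "'a::ring_1 cx \<Rightarrow> nat \<Rightarrow> nat \<Rightarrow> 'a cx \<Rightarrow> bool" where
  "summand_at W r c Y \<longleftrightarrow> sublist_at (tgt W) r (tgt Y) \<and> sublist_at (src W) c (src Y)
     \<and> (\<forall>p q. r \<le> p \<and> p < r + length (tgt Y) \<or> c \<le> q \<and> q < c + length (src Y)
          \<longrightarrow> dif W p q = embed r c (dif Y) p q)"

lemma dsum_simps [simp]: "src (dsum U V) = src U @ src V" "tgt (dsum U V) = tgt U @ tgt V"
  unfolding dsum_def src_def tgt_def by simp_all

lemma dif_dsum:
  assumes "wf_cx U" "wf_cx V"
  shows "dif (dsum U V) = dif U + embed (length (tgt U)) (length (src U)) (dif V)"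
  using assms unfolding wf_cx_def
  by (auto simp: fun_eq_iff dsum_def dif_def src_def tgt_def embed_def hom_entry_zero)

lemma embed_0_0 [simp]: "embed 0 0 M = M"
  unfolding embed_def by simp

lemma wf_cx_dsum: "wf_cx U \<Longrightarrow> wf_cx V \<Longrightarrow> wf_cx (dsum U V)"
  using embed_hom[of "dif U" "src U" "tgt U" _ 0 _ 0] embed_hom[of "dif V" "src V" "tgt V"]
  by (auto simp: dif_dsum wf_cx_def sublist_at_append intro!: hom_add)

lemma summand_at_dsum:
  assumes "wf_cx U" "wf_cx V"
  shows "summand_at (dsum U V) 0 0 U" "summand_at (dsum U V) (length (tgt U)) (length (src U)) V"
  using assms unfolding summand_at_def wf_cx_def
  by (auto simp: sublist_at_append dif_dsum[OF assms] embed_def hom_entry_zero)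

lemma block_summand_dif:
  assumes "summand_at W r c Y" "wf_cx Y"
  shows "block r c (length (tgt Y)) (length (src Y)) (dif W) = dif Y"
  using assms unfolding summand_at_def wf_cx_def block_def embed_def
  by (auto simp: fun_eq_iff hom_entry_zero)

lemma block_mmul_dif_summand_left:
  assumes "summand_at W r c Y" "wf_cx Y"
  shows "block r c0 (length (tgt Y)) nc (mmul (length (src W)) (dif W) X)
    = mmul (length (src Y)) (dif Y) (block c c0 (length (src Y)) nc X)"
proof -
  have "block r c0 (length (tgt Y)) nc (mmul (length (src W)) (dif W) X)
    = mmul (length (src Y)) (block r c (length (tgt Y)) (length (src Y)) (dif W))
        (block c c0 (length (src Y)) nc X)"
    using assms unfolding summand_at_def sublist_at_def wf_cx_def
    by (intro block_mmul) (auto simp: embed_def hom_entry_zero)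
  then show ?thesis
    using block_summand_dif[OF assms] by simp
qed

lemma block_mmul_dif_summand_right:
  assumes "summand_at W r c Y" "wf_cx Y"
  shows "block r0 c nr (length (src Y)) (mmul (length (tgt W)) X (dif W))
    = mmul (length (tgt Y)) (block r0 r nr (length (tgt Y)) X) (dif Y)"
proof -
  have "block r0 c nr (length (src Y)) (mmul (length (tgt W)) X (dif W))
    = mmul (length (tgt Y)) (block r0 r nr (length (tgt Y)) X)
        (block r c (length (tgt Y)) (length (src Y)) (dif W))"
    using assms unfolding summand_at_def sublist_at_def wf_cx_def
    by (intro block_mmul) (auto simp: embed_def hom_entry_zero)
  then show ?thesis
    using block_summand_dif[OF assms] by simp
qed

lemma hom_shift_zero_summand_right:
  assumes "hom_shift_zero X W" "wf_cx X" "summand_at W r c Y" "wf_cx Y"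
  shows "hom_shift_zero X Y"
  unfolding hom_shift_zero_def
proof
  fix h assume h: "h \<in> hom (src X) (tgt Y)"
  have sub: "sublist_at (tgt W) r (tgt Y)" "sublist_at (src W) c (src Y)"
    using assms(3) unfolding summand_at_def by auto
  have "embed r 0 h \<in> hom (src X) (tgt W)"
    using embed_hom[OF h sub(1) sublist_at_self] .
  then obtain s t where s: "s \<in> hom (tgt X) (tgt W)" and t: "t \<in> hom (src X) (src W)"
    and eq: "embed r 0 h = mmul (length (tgt X)) s (dif X) + mmul (length (src W)) (dif W) t"
    using assms(1) unfolding hom_shift_zero_def madd_eq_plus by blast
  have "h = block r 0 (length (tgt Y)) (length (src X)) (embed r 0 h)"
    using block_embed[OF h] by simp
  also have "\<dots> = mmul (length (tgt X)) (block r 0 (length (tgt Y)) (length (tgt X)) s) (dif X)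
      + mmul (length (src Y)) (dif Y) (block c 0 (length (src Y)) (length (src X)) t)"
    unfolding eq block_add block_rows_mmul[OF assms(2)[unfolded wf_cx_def]]
      block_mmul_dif_summand_left[OF assms(3,4)] ..
  finally show "\<exists>s\<in>hom (tgt X) (tgt Y). \<exists>t\<in>hom (src X) (src Y).
      h = madd (mmul (length (tgt X)) s (dif X)) (mmul (length (src Y)) (dif Y) t)"
    unfolding madd_eq_plus using block_hom[OF s sub(1) sublist_at_self] block_hom[OF t sub(2) sublist_at_self]
    by blast
qed

lemma hom_shift_zero_summand_left:
  assumes "hom_shift_zero W Y" "wf_cx Y" "summand_at W r c X" "wf_cx X"
  shows "hom_shift_zero X Y"
  unfolding hom_shift_zero_def
proof
  fix h assume h: "h \<in> hom (src X) (tgt Y)"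
  have sub: "sublist_at (tgt W) r (tgt X)" "sublist_at (src W) c (src X)"
    using assms(3) unfolding summand_at_def by auto
  have "embed 0 c h \<in> hom (src W) (tgt Y)"
    using embed_hom[OF h sublist_at_self sub(2)] .
  then obtain s t where s: "s \<in> hom (tgt W) (tgt Y)" and t: "t \<in> hom (src W) (src Y)"
    and eq: "embed 0 c h = mmul (length (tgt W)) s (dif W) + mmul (length (src Y)) (dif Y) t"
    using assms(1) unfolding hom_shift_zero_def madd_eq_plus by blast
  have "h = block 0 c (length (tgt Y)) (length (src X)) (embed 0 c h)"
    using block_embed[OF h] by simp
  also have "\<dots> = mmul (length (tgt X)) (block 0 r (length (tgt Y)) (length (tgt X)) s) (dif X)
      + mmul (length (src Y)) (dif Y) (block 0 c (length (src Y)) (length (src X)) t)"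
    unfolding eq block_add block_cols_mmul[OF assms(2)[unfolded wf_cx_def]]
      block_mmul_dif_summand_right[OF assms(3,4)] ..
  finally show "\<exists>s\<in>hom (tgt X) (tgt Y). \<exists>t\<in>hom (src X) (src Y).
      h = madd (mmul (length (tgt X)) s (dif X)) (mmul (length (src Y)) (dif Y) t)"
    unfolding madd_eq_plus using block_hom[OF s sublist_at_self sub(1)] block_hom[OF t sublist_at_self sub(2)]
    by blast
qed

lemma wf_cx_foldr_dsum: "\<forall>T\<in>set Ts. wf_cx T \<Longrightarrow> wf_cx (foldr dsum Ts zero_cx)"
proof (induction Ts)
  case Nil
  then show ?case by (simp add: wf_cx_def)
next
  case (Cons T Ts)
  then show ?case by (simp add: wf_cx_dsum)
qed

lemma hom_shift_zero_foldr_dsum_right: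
  assumes "\<forall>T\<in>set Ts. wf_cx T" "wf_cx X" "hom_shift_zero X (foldr dsum Ts zero_cx)" "T \<in> set Ts"
  shows "hom_shift_zero X T"
  using assms
proof (induction Ts)
  case (Cons T0 Ts)
  have wf: "wf_cx T0" "wf_cx (foldr dsum Ts zero_cx)"
    using Cons.prems(1) wf_cx_foldr_dsum by auto
  have T0: "hom_shift_zero X T0" and Ts: "hom_shift_zero X (foldr dsum Ts zero_cx)"
    using hom_shift_zero_summand_right[OF Cons.prems(3)[simplified] Cons.prems(2)] summand_at_dsum[OF wf] wf
    by blast+
  show ?case
  proof (cases "T = T0")
    case False
    then show ?thesis
      using Cons.IH Cons.prems(1,2,4) Ts by simp
  qed (simp add: T0)
qed simp

lemma hom_shift_zero_foldr_dsum_left: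
  assumes "\<forall>T\<in>set Ts. wf_cx T" "wf_cx Y" "hom_shift_zero (foldr dsum Ts zero_cx) Y" "T \<in> set Ts"
  shows "hom_shift_zero T Y"
  using assms
proof (induction Ts)
  case (Cons T0 Ts)
  have wf: "wf_cx T0" "wf_cx (foldr dsum Ts zero_cx)"
    using Cons.prems(1) wf_cx_foldr_dsum by auto
  have T0: "hom_shift_zero T0 Y" and Ts: "hom_shift_zero (foldr dsum Ts zero_cx) Y"
    using hom_shift_zero_summand_left[OF Cons.prems(3)[simplified] Cons.prems(2)] summand_at_dsum[OF wf] wf
    by blast+
  show ?case
  proof (cases "T = T0")
    case False
    then show ?thesis
      using Cons.IH Cons.prems(1,2,4) Ts by simp
  qed (simp add: T0)
qed simp

lemma hom_shift_zero_if_presilting_foldr_dsum: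
  assumes "\<forall>T\<in>set Ts. wf_cx T" "presilting (foldr dsum Ts zero_cx)" "T \<in> set Ts" "T' \<in> set Ts"
  shows "hom_shift_zero T T'"
  using assms hom_shift_zero_foldr_dsum_left hom_shift_zero_foldr_dsum_right wf_cx_foldr_dsum
  unfolding presilting_iff_hom_shift_zero by blast

section \<open>The stalk complexes \<open>e\<Lambda>[1]\<close> and \<open>e\<Lambda>\<close>\<close>

lemma primitive_idem_split:
  assumes "primitive_idem e" "x \<in> corner e e" "idem x" "idem y" "x + y = e"
  shows "x = 0 \<or> y = 0"
proof -
  have "idem e" and y: "y = e - x"
    using assms(1,5) unfolding primitive_idem_def by (auto simp: algebra_simps)
  then have "x * e = x" "e * x = x"
    using corner_mult_idem idem_mult_corner assms(2) by blast+
  then have "x * y = 0" "y * x = 0"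
    using assms(3) unfolding y idem_def by (simp_all add: right_diff_distrib left_diff_distrib)
  then show ?thesis
    using assms unfolding primitive_idem_def by blast
qed

lemma contractible_is_zero:
  assumes "h \<in> hom (tgt U) (src U)"
    and "mmul (length (tgt U)) h (dif U) = idm (src U)" "mmul (length (src U)) (dif U) h = idm (tgt U)"
  shows "is_zero U"
  unfolding is_zero_def kiso_def
proof (intro exI conjI)
  show "chain_map U zero_cx (0, 0)" "chain_map zero_cx U (0, 0)"
    unfolding chain_map_def by simp_all
  show "null_htp U U (cm_sub (cm_comp zero_cx (0, 0) (0, 0)) (cm_id U))"
    unfolding null_htp_def cm_sub_def cm_comp_def cm_id_def msub_eq_minus
    using assms by (intro bexI[of _ "- h"]) (auto simp: mmul_neg_left mmul_neg_right intro: hom_uminus)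
  show "null_htp zero_cx zero_cx (cm_sub (cm_comp U (0, 0) (0, 0)) (cm_id zero_cx))"
    unfolding null_htp_def cm_sub_def cm_comp_def cm_id_def msub_eq_minus
    by (intro bexI[of _ 0]) (auto simp: idm_def fun_eq_iff)
qed

text \<open>In the applications \<open>N\<close> is \<open>H d\<close> or \<open>d H\<close> for a homotopy \<open>H\<close> restricted to
  a direct summand, and \<open>N = -1\<close> makes that summand contractible.\<close>

lemma idempotent_of_split:
  assumes xs: "\<forall>x\<in>set xs. idem x"
    and a: "a \<in> hom [e] xs" and b: "b \<in> hom xs [e]" and N: "N \<in> hom xs xs"
    and ab: "mmul 1 a b = idm xs + N" and NN: "mmul (length xs) N N = - N"
    and bNa: "mmul (length xs) b (mmul (length xs) N a) = 0"
  defines "x \<equiv> mmul (length xs) b a 0 0"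
  shows "x * x = x" "x \<in> corner e e" "x = 0 \<Longrightarrow> N = - idm xs"
proof -
  let ?n = "length xs"
  define X where "X = mmul ?n b a"
  have X: "X \<in> hom [e] [e]"
    unfolding X_def by (rule mmul_hom[OF b a])
  have "mmul 1 X X = mmul ?n b (mmul ?n (mmul 1 a b) a)"
    unfolding X_def by (simp add: mmul_assoc)
  also have "\<dots> = X"
    unfolding ab mmul_add_left mmul_idm_left[OF xs a] mmul_add_right bNa X_def by simp
  finally show "x * x = x"
    unfolding x_def X_def[symmetric] using mmul_1_00[of X X] by simp
  show "x \<in> corner e e"
    unfolding x_def X_def[symmetric] using hom_entry[OF X, of 0 0] by simp
  assume "x = 0"
  have "X = 0"
  proof (intro ext)
    fix p q
    show "X p q = 0 p q"
      using \<open>x = 0\<close> hom_entry_zero[OF X, of p q] unfolding x_def X_def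
      by (cases "p = 0 \<and> q = 0") auto
  qed
  have "mmul ?n (mmul 1 a b) (mmul 1 a b) = mmul 1 a (mmul 1 X b)"
    unfolding X_def by (simp add: mmul_assoc)
  then have "mmul ?n (mmul 1 a b) (mmul 1 a b) = 0"
    using \<open>X = 0\<close> by simp
  moreover have "mmul ?n (mmul 1 a b) (mmul 1 a b) = mmul 1 a b"
    unfolding ab mmul_add_left mmul_add_right NN mmul_idm_left[OF xs N] mmul_idm_right[OF xs N]
      mmul_idm_left[OF xs idm_hom[OF xs]]
    by simp
  ultimately show "N = - idm xs"
    using ab by (simp add: eq_neg_iff_add_eq_0 add.commute)
qed

definition shifted_proj :: "'a::ring_1 \<Rightarrow> 'a cx" where
  "shifted_proj e = ([e], [], 0)"

definition proj_cx :: "'a::ring_1 \<Rightarrow> 'a cx" where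
  "proj_cx e = ([], [e], 0)"

lemma shifted_proj_simps [simp]: "src (shifted_proj e) = [e]" "tgt (shifted_proj e) = []" "dif (shifted_proj e) = 0"
  and proj_cx_simps [simp]: "src (proj_cx e) = []" "tgt (proj_cx e) = [e]" "dif (proj_cx e) = 0"
  unfolding shifted_proj_def proj_cx_def src_def tgt_def dif_def by simp_all

lemma shifted_proj_summand_idempotent:
  assumes sum: "summand_at W r c U" and wf: "wf_cx U"
    and idem: "\<forall>x\<in>set (src U). idem x" "\<forall>x\<in>set (tgt U). idem x"
    and f: "f \<in> hom [e] (src W)" and g: "g \<in> hom (src W) [e]" and H: "H \<in> hom (tgt W) (src W)"
    and df: "mmul (length (src W)) (dif W) f = 0"
    and fg: "mmul 1 f g = idm (src W) + mmul (length (tgt W)) H (dif W)"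
    and dH: "mmul (length (src W)) (dif W) H = - idm (tgt W)"
  defines "x \<equiv> mmul (length (src U)) (block 0 c 1 (length (src U)) g) (block c 0 (length (src U)) 1 f) 0 0"
  shows "x * x = x" "x \<in> corner e e" "x = 0 \<Longrightarrow> is_zero U"
proof -
  let ?k = "length (src U)" and ?m = "length (tgt U)" and ?d = "dif U"
  define a b HU where "a = block c 0 ?k 1 f" and "b = block 0 c 1 ?k g" and "HU = block c r ?k ?m H"
  have sub: "sublist_at (tgt W) r (tgt U)" "sublist_at (src W) c (src U)"
    using sum unfolding summand_at_def by auto
  have a: "a \<in> hom [e] (src U)" and b: "b \<in> hom (src U) [e]" and HU: "HU \<in> hom (tgt U) (src U)"
    unfolding a_def b_def HU_def
    using block_hom[OF f sub(2) sublist_at_self] block_hom[OF g sublist_at_self sub(2)]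
      block_hom[OF H sub(2) sub(1)] by simp_all
  have da: "mmul ?k ?d a = 0"
    using block_mmul_dif_summand_left[OF sum wf, of 0 1 f] unfolding df a_def by simp
  have ab: "mmul 1 a b = idm (src U) + mmul ?m HU ?d"
    using arg_cong[OF fg, of "block c c ?k ?k"]
    unfolding block_mmul_1 block_add block_idm[OF sub(2)] block_mmul_dif_summand_right[OF sum wf]
      a_def b_def HU_def .
  have dHU: "mmul ?k ?d HU = - idm (tgt U)"
    using arg_cong[OF dH, of "block r r ?m ?m"]
    unfolding block_uminus block_idm[OF sub(1)] block_mmul_dif_summand_left[OF sum wf] HU_def .
  have N: "mmul ?m HU ?d \<in> hom (src U) (src U)"
    using mmul_hom[OF HU wf[unfolded wf_cx_def]] .
  have "mmul ?k (mmul ?m HU ?d) (mmul ?m HU ?d) = mmul ?m HU (mmul ?m (mmul ?k ?d HU) ?d)"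
    by (simp add: mmul_assoc)
  also have "\<dots> = - mmul ?m HU ?d"
    unfolding dHU mmul_neg_left mmul_idm_left[OF idem(2) wf[unfolded wf_cx_def]] mmul_neg_right ..
  finally have NN: "mmul ?k (mmul ?m HU ?d) (mmul ?m HU ?d) = - mmul ?m HU ?d" .
  have bNa: "mmul ?k b (mmul ?k (mmul ?m HU ?d) a) = 0"
    by (simp add: mmul_assoc da)
  note split = idempotent_of_split[OF idem(1) a b N ab NN bNa]
  show "x * x = x" "x \<in> corner e e"
    unfolding x_def a_def[symmetric] b_def[symmetric] using split(1,2) .
  assume "x = 0"
  then have "mmul ?m (- HU) ?d = idm (src U)"
    using split(3) unfolding x_def a_def b_def by (simp add: mmul_neg_left)
  then show "is_zero U"
    using contractible_is_zero[OF hom_uminus[OF HU]] dHU by (simp add: mmul_neg_right)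
qed

lemma proj_cx_summand_idempotent:
  assumes sum: "summand_at W r c U" and wf: "wf_cx U"
    and idem: "\<forall>x\<in>set (src U). idem x" "\<forall>x\<in>set (tgt U). idem x"
    and f: "f \<in> hom [e] (tgt W)" and g: "g \<in> hom (tgt W) [e]" and H: "H \<in> hom (tgt W) (src W)"
    and gd: "mmul (length (tgt W)) g (dif W) = 0"
    and fg: "mmul 1 f g = idm (tgt W) + mmul (length (src W)) (dif W) H"
    and Hd: "mmul (length (tgt W)) H (dif W) = - idm (src W)"
  defines "x \<equiv> mmul (length (tgt U)) (block 0 r 1 (length (tgt U)) g) (block r 0 (length (tgt U)) 1 f) 0 0"
  shows "x * x = x" "x \<in> corner e e" "x = 0 \<Longrightarrow> is_zero U"
proof -
  let ?k = "length (src U)" and ?m = "length (tgt U)" and ?d = "dif U"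
  define a b HU where "a = block r 0 ?m 1 f" and "b = block 0 r 1 ?m g" and "HU = block c r ?k ?m H"
  have sub: "sublist_at (tgt W) r (tgt U)" "sublist_at (src W) c (src U)"
    using sum unfolding summand_at_def by auto
  have a: "a \<in> hom [e] (tgt U)" and b: "b \<in> hom (tgt U) [e]" and HU: "HU \<in> hom (tgt U) (src U)"
    unfolding a_def b_def HU_def
    using block_hom[OF f sub(1) sublist_at_self] block_hom[OF g sublist_at_self sub(1)]
      block_hom[OF H sub(2) sub(1)] by simp_all
  have bd: "mmul ?m b ?d = 0"
    using block_mmul_dif_summand_right[OF sum wf, of 0 1 g] unfolding gd b_def by simp
  have ab: "mmul 1 a b = idm (tgt U) + mmul ?k ?d HU"
    using arg_cong[OF fg, of "block r r ?m ?m"]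
    unfolding block_mmul_1 block_add block_idm[OF sub(1)] block_mmul_dif_summand_left[OF sum wf]
      a_def b_def HU_def .
  have HUd: "mmul ?m HU ?d = - idm (src U)"
    using arg_cong[OF Hd, of "block c c ?k ?k"]
    unfolding block_uminus block_idm[OF sub(2)] block_mmul_dif_summand_right[OF sum wf] HU_def .
  have N: "mmul ?k ?d HU \<in> hom (tgt U) (tgt U)"
    using mmul_hom[OF wf[unfolded wf_cx_def] HU] .
  have "mmul ?m (mmul ?k ?d HU) (mmul ?k ?d HU) = mmul ?k ?d (mmul ?k (mmul ?m HU ?d) HU)"
    by (simp add: mmul_assoc)
  also have "\<dots> = - mmul ?k ?d HU"
    unfolding HUd mmul_neg_left mmul_idm_left[OF idem(1) HU] mmul_neg_right ..
  finally have NN: "mmul ?m (mmul ?k ?d HU) (mmul ?k ?d HU) = - mmul ?k ?d HU" .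
  have bNa: "mmul ?m b (mmul ?m (mmul ?k ?d HU) a) = 0"
    by (simp add: mmul_assoc[symmetric] bd)
  note split = idempotent_of_split[OF idem(2) a b N ab NN bNa]
  show "x * x = x" "x \<in> corner e e"
    unfolding x_def a_def[symmetric] b_def[symmetric] using split(1,2) .
  assume "x = 0"
  then have "mmul ?k ?d (- HU) = idm (tgt U)"
    using split(3) unfolding x_def a_def b_def by (simp add: mmul_neg_right)
  then show "is_zero U"
    using contractible_is_zero[OF hom_uminus[OF HU]] HUd by (simp add: mmul_neg_left)
qed

lemma kiso_shifted_proj_dsum:
  assumes e: "primitive_idem e" and iso: "kiso (shifted_proj e) (dsum U V)"
    and U: "wf_cx U" "\<forall>x\<in>set (src U). idem x" "\<forall>x\<in>set (tgt U). idem x"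
    and V: "wf_cx V" "\<forall>x\<in>set (src V). idem x" "\<forall>x\<in>set (tgt V). idem x"
  shows "is_zero U \<or> is_zero V"
proof -
  let ?W = "dsum U V"
  obtain f g where cf: "chain_map (shifted_proj e) ?W f" and cg: "chain_map ?W (shifted_proj e) g"
    and n1: "null_htp (shifted_proj e) (shifted_proj e) (cm_sub (cm_comp ?W g f) (cm_id (shifted_proj e)))"
    and n2: "null_htp ?W ?W (cm_sub (cm_comp (shifted_proj e) f g) (cm_id ?W))"
    using iso unfolding kiso_def by blast
  have f: "fst f \<in> hom [e] (src ?W)" and g: "fst g \<in> hom (src ?W) [e]"
    and df: "mmul (length (src ?W)) (dif ?W) (fst f) = 0"
    using cf cg unfolding chain_map_def by simp_all
  have gf: "mmul (length (src ?W)) (fst g) (fst f) = idm [e]"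
    using n1 unfolding null_htp_def cm_sub_def cm_comp_def cm_id_def msub_eq_minus by simp
  obtain H where H: "H \<in> hom (tgt ?W) (src ?W)"
    and fg: "mmul 1 (fst f) (fst g) = idm (src ?W) + mmul (length (tgt ?W)) H (dif ?W)"
    and dH: "mmul (length (src ?W)) (dif ?W) H = - idm (tgt ?W)"
    using n2 unfolding null_htp_def cm_sub_def cm_comp_def cm_id_def msub_eq_minus
    by (auto simp: algebra_simps)
  note xU = shifted_proj_summand_idempotent[OF summand_at_dsum(1)[OF U(1) V(1)] U f g H df fg dH]
  note xV = shifted_proj_summand_idempotent[OF summand_at_dsum(2)[OF U(1) V(1)] V f g H df fg dH]
  have "mmul (length (src U)) (block 0 0 1 (length (src U)) (fst g)) (block 0 0 (length (src U)) 1 (fst f)) 0 0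
      + mmul (length (src V)) (block 0 (length (src U)) 1 (length (src V)) (fst g))
          (block (length (src U)) 0 (length (src V)) 1 (fst f)) 0 0 = e"
    using gf mmul_add_00[of "length (src U)" "length (src V)" "fst g" "fst f"] by (simp add: idm_def)
  then show ?thesis
    using primitive_idem_split[OF e xU(2)] xU(1,3) xV(1,3) unfolding idem_def by blast
qed

lemma kiso_proj_cx_dsum:
  assumes e: "primitive_idem e" and iso: "kiso (proj_cx e) (dsum U V)"
    and U: "wf_cx U" "\<forall>x\<in>set (src U). idem x" "\<forall>x\<in>set (tgt U). idem x"
    and V: "wf_cx V" "\<forall>x\<in>set (src V). idem x" "\<forall>x\<in>set (tgt V). idem x"
  shows "is_zero U \<or> is_zero V"
proof -
  let ?W = "dsum U V"
  obtain f g where cf: "chain_map (proj_cx e) ?W f" and cg: "chain_map ?W (proj_cx e) g"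
    and n1: "null_htp (proj_cx e) (proj_cx e) (cm_sub (cm_comp ?W g f) (cm_id (proj_cx e)))"
    and n2: "null_htp ?W ?W (cm_sub (cm_comp (proj_cx e) f g) (cm_id ?W))"
    using iso unfolding kiso_def by blast
  have f: "snd f \<in> hom [e] (tgt ?W)" and g: "snd g \<in> hom (tgt ?W) [e]"
    and gd: "mmul (length (tgt ?W)) (snd g) (dif ?W) = 0"
    using cf cg unfolding chain_map_def by simp_all
  have gf: "mmul (length (tgt ?W)) (snd g) (snd f) = idm [e]"
    using n1 unfolding null_htp_def cm_sub_def cm_comp_def cm_id_def msub_eq_minus by simp
  obtain H where H: "H \<in> hom (tgt ?W) (src ?W)"
    and Hd: "mmul (length (tgt ?W)) H (dif ?W) = - idm (src ?W)"
    and fg: "mmul 1 (snd f) (snd g) = idm (tgt ?W) + mmul (length (src ?W)) (dif ?W) H"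
    using n2 unfolding null_htp_def cm_sub_def cm_comp_def cm_id_def msub_eq_minus
    by (auto simp: algebra_simps)
  note xU = proj_cx_summand_idempotent[OF summand_at_dsum(1)[OF U(1) V(1)] U f g H gd fg Hd]
  note xV = proj_cx_summand_idempotent[OF summand_at_dsum(2)[OF U(1) V(1)] V f g H gd fg Hd]
  have "mmul (length (tgt U)) (block 0 0 1 (length (tgt U)) (snd g)) (block 0 0 (length (tgt U)) 1 (snd f)) 0 0
      + mmul (length (tgt V)) (block 0 (length (tgt U)) 1 (length (tgt V)) (snd g))
          (block (length (tgt U)) 0 (length (tgt V)) 1 (snd f)) 0 0 = e"
    using gf mmul_add_00[of "length (tgt U)" "length (tgt V)" "snd g" "snd f"] by (simp add: idm_def)
  then show ?thesis
    using primitive_idem_split[OF e xU(2)] xU(1,3) xV(1,3) unfolding idem_def by blast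
qed

lemma idm_eq_0_if_is_zero:
  assumes "is_zero T" "dif T = 0"
  shows "idm (src T) = 0" "idm (tgt T) = 0"
proof -
  obtain f g where "null_htp T T (cm_sub (cm_comp zero_cx g f) (cm_id T))"
    using assms(1) unfolding is_zero_def kiso_def by blast
  then show "idm (src T) = 0" "idm (tgt T) = 0"
    using assms(2) unfolding null_htp_def cm_sub_def cm_comp_def cm_id_def msub_eq_minus by auto
qed

lemma idm_singleton_00: "idm [e] 0 0 = e"
  unfolding idm_def by simp

lemma not_is_zero_shifted_proj: "primitive_idem e \<Longrightarrow> \<not> is_zero (shifted_proj e)"
  and not_is_zero_proj_cx: "primitive_idem e \<Longrightarrow> \<not> is_zero (proj_cx e)"
  using idm_eq_0_if_is_zero[of "shifted_proj e"] idm_eq_0_if_is_zero[of "proj_cx e"]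
    idm_singleton_00[of e] unfolding primitive_idem_def by (auto simp: fun_eq_iff)

lemma not_kiso_shifted_proj_proj_cx:
  assumes "primitive_idem e"
  shows "\<not> kiso (shifted_proj e) (proj_cx e')"
proof
  assume "kiso (shifted_proj e) (proj_cx e')"
  then obtain f g where "chain_map (shifted_proj e) (proj_cx e') f"
    and "null_htp (shifted_proj e) (shifted_proj e) (cm_sub (cm_comp (proj_cx e') g f) (cm_id (shifted_proj e)))"
    unfolding kiso_def by blast
  then have "idm [e] = 0"
    unfolding null_htp_def cm_sub_def cm_comp_def cm_id_def msub_eq_minus by auto
  then show False
    using assms idm_singleton_00[of e] unfolding primitive_idem_def by (auto simp: fun_eq_iff)
qed

lemma is_cx_wf_idem:
  assumes "is_cx e1 e2 U" "idem e1" "idem e2"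
  shows "wf_cx U" "\<forall>x\<in>set (src U). idem x" "\<forall>x\<in>set (tgt U). idem x"
  using assms unfolding is_cx_def wf_cx_def by auto

lemma indec_shifted_proj:
  assumes "primitive_idem e" "e \<in> {e1, e2}" "idem e1" "idem e2"
  shows "indec e1 e2 (shifted_proj e)"
  unfolding indec_def
proof (intro conjI allI impI)
  show "is_cx e1 e2 (shifted_proj e)"
    using assms(2) unfolding is_cx_def by simp
  show "\<not> is_zero (shifted_proj e)"
    using not_is_zero_shifted_proj[OF assms(1)] .
  fix U V assume "is_cx e1 e2 U \<and> is_cx e1 e2 V \<and> kiso (shifted_proj e) (dsum U V)"
  then show "is_zero U \<or> is_zero V"
    using kiso_shifted_proj_dsum[OF assms(1)] is_cx_wf_idem assms(3,4) by blast
qed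

lemma indec_proj_cx:
  assumes "primitive_idem e" "e \<in> {e1, e2}" "idem e1" "idem e2"
  shows "indec e1 e2 (proj_cx e)"
  unfolding indec_def
proof (intro conjI allI impI)
  show "is_cx e1 e2 (proj_cx e)"
    using assms(2) unfolding is_cx_def by simp
  show "\<not> is_zero (proj_cx e)"
    using not_is_zero_proj_cx[OF assms(1)] .
  fix U V assume "is_cx e1 e2 U \<and> is_cx e1 e2 V \<and> kiso (proj_cx e) (dsum U V)"
  then show "is_zero U \<or> is_zero V"
    using kiso_proj_cx_dsum[OF assms(1)] is_cx_wf_idem assms(3,4) by blast
qed

lemma presilting_shifted_proj_proj_cx:
  assumes "corner e' e = {0}"
  shows "presilting (foldr dsum [shifted_proj e, proj_cx e'] zero_cx)"
  unfolding presilting_def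
proof
  let ?T = "foldr dsum [shifted_proj e, proj_cx e'] zero_cx"
  fix h assume h: "h \<in> hom (src ?T) (tgt ?T)"
  have "h = 0"
  proof (intro ext)
    fix p q
    show "h p q = 0 p q"
      using hom_entry[OF h, of 0 0] hom_entry_zero[OF h, of p q] assms
      by (cases "p = 0 \<and> q = 0") auto
  qed
  then show "\<exists>s\<in>hom (tgt ?T) (tgt ?T). \<exists>t\<in>hom (src ?T) (src ?T).
      h = madd (mmul (length (tgt ?T)) s (dif ?T)) (mmul (length (src ?T)) (dif ?T) t)"
    by (intro bexI[of _ 0]) (auto simp: madd_eq_plus)
qed

lemma kiso_sym: "kiso T U \<Longrightarrow> kiso U T"
  unfolding kiso_def by blast

lemma gfan_shifted_proj_proj_cx:
  assumes "primitive_idem e" "primitive_idem e'" "{e, e'} = {e1, e2}" "idem e1" "idem e2"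
    and "corner e' e = {0}"
  shows "poscone {gvec e1 e2 (shifted_proj e), gvec e1 e2 (proj_cx e')} \<in> gfan e1 e2"
proof -
  let ?Ts = "[shifted_proj e, proj_cx e']"
  have "\<forall>T\<in>set ?Ts. indec e1 e2 T"
    using indec_shifted_proj[OF assms(1) _ assms(4,5)] indec_proj_cx[OF assms(2) _ assms(4,5)] assms(3)
    by auto
  moreover have "\<forall>i<length ?Ts. \<forall>j<length ?Ts. i \<noteq> j \<longrightarrow> \<not> kiso (?Ts ! i) (?Ts ! j)"
  proof (intro allI impI)
    fix i j assume "i < length ?Ts" "j < length ?Ts" "i \<noteq> j"
    then have "i = 0 \<and> j = 1 \<or> i = 1 \<and> j = 0" by auto
    then show "\<not> kiso (?Ts ! i) (?Ts ! j)"
      using not_kiso_shifted_proj_proj_cx[OF assms(1), of e'] kiso_sym[of "proj_cx e'" "shifted_proj e"] by auto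
  qed
  ultimately have "poscone (gvec e1 e2 ` set ?Ts) \<in> gfan e1 e2"
    unfolding gfan_def using presilting_shifted_proj_proj_cx[OF assms(6)] by blast
  then show ?thesis by simp
qed

section \<open>Cones in \<open>\<real>\<^sup>2\<close>\<close>

lemma poscone_self: "v \<in> S \<Longrightarrow> v \<in> poscone S"
  unfolding poscone_def by (rule CollectI, rule exI[of _ "{v}"], rule exI[of _ "\<lambda>_. 1"]) simp

lemma inner_poscone:
  assumes "w \<in> poscone S"
  obtains F c where "finite F" "F \<subseteq> S" "\<forall>v. 0 \<le> c v" "\<And>u. u \<bullet> w = (\<Sum>v\<in>F. c v * (u \<bullet> v))"
  using assms unfolding poscone_def by (auto simp: inner_sum_right)

lemma inner_poscone_nonneg:
  assumes "\<forall>v\<in>S. 0 \<le> u \<bullet> v" "w \<in> poscone S"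
  shows "0 \<le> u \<bullet> w"
proof -
  obtain F c where "F \<subseteq> S" "\<forall>v. 0 \<le> c v" "u \<bullet> w = (\<Sum>v\<in>F. c v * (u \<bullet> v))"
    using inner_poscone[OF assms(2)] by metis
  then show ?thesis
    using assms(1) by (auto intro!: sum_nonneg)
qed

lemma poscone_ray_witness:
  assumes S: "\<forall>v\<in>S. 0 \<le> u \<bullet> v \<and> 0 \<le> u' \<bullet> v" and w: "w \<in> poscone S"
    and "0 < u \<bullet> w" "u' \<bullet> w = 0"
  shows "\<exists>v\<in>S. 0 < u \<bullet> v \<and> u' \<bullet> v = 0"
proof -
  obtain F c where F: "finite F" "F \<subseteq> S" "\<forall>v. 0 \<le> c v"
    and lin: "\<And>u. u \<bullet> w = (\<Sum>v\<in>F. c v * (u \<bullet> v))"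
    using inner_poscone[OF w] by metis
  have "\<forall>v\<in>F. 0 \<le> c v * (u' \<bullet> v)"
    using F(2,3) S by (blast intro: mult_nonneg_nonneg)
  then have zero: "\<forall>v\<in>F. c v * (u' \<bullet> v) = 0"
    using sum_nonneg_eq_0_iff[OF F(1), of "\<lambda>v. c v * (u' \<bullet> v)"] lin[of u'] assms(4) by simp
  have "\<exists>v\<in>F. 0 < c v * (u \<bullet> v)"
  proof (rule ccontr)
    assume "\<not> (\<exists>v\<in>F. 0 < c v * (u \<bullet> v))"
    then have "(\<Sum>v\<in>F. c v * (u \<bullet> v)) \<le> 0"
      by (simp add: not_less sum_nonpos)
    then show False
      using lin[of u] assms(3) by simp
  qed
  then obtain v where v: "v \<in> F" "0 < c v * (u \<bullet> v)" ..
  moreover have "0 \<le> c v"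
    using F(3) by blast
  ultimately have "0 < c v" "0 < u \<bullet> v"
    using zero_less_mult_iff[of "c v" "u \<bullet> v"] by linarith+
  moreover have "u' \<bullet> v = 0"
    using bspec[OF zero v(1)] calculation(1) by simp
  ultimately show ?thesis
    using v(1) F(2) by blast
qed

lemma inner_pair_real: "(a, b) \<bullet> v = a * fst v + b * snd v" for a b :: real
  by (cases v) (simp add: inner_Pair)

lemma poscone_quadrant_witnesses:
  fixes S :: "(real \<times> real) set"
  assumes eq: "poscone S = poscone {(-1, 0), (0, 1)}"
  shows "\<exists>v\<in>S. fst v < 0 \<and> snd v = 0" and "\<exists>v\<in>S. fst v = 0 \<and> 0 < snd v"
proof -
  have "(-1, 0) \<in> poscone S" "(0, 1) \<in> poscone S"
    unfolding eq by (simp_all add: poscone_self)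
  moreover have "v \<in> poscone {(-1, 0), (0, 1)}" if "v \<in> S" for v
    using poscone_self[OF that] eq by simp
  then have "\<forall>v\<in>S. 0 \<le> (-1, 0) \<bullet> v \<and> 0 \<le> (0, 1) \<bullet> v"
    using inner_poscone_nonneg[of "{(-1, 0), (0, 1)}"] by simp
  ultimately show "\<exists>v\<in>S. fst v < 0 \<and> snd v = 0" and "\<exists>v\<in>S. fst v = 0 \<and> 0 < snd v"
    using poscone_ray_witness[of S "(-1, 0)" "(0, 1)"] poscone_ray_witness[of S "(0, 1)" "(-1, 0)"]
    unfolding inner_pair_real by (simp_all add: conj_commute)
qed

lemma swap_poscone_subset: "prod.swap ` poscone S \<subseteq> poscone (prod.swap ` S)"
proof
  fix w assume "w \<in> prod.swap ` poscone S"
  then obtain w' where "w' \<in> poscone S" and w: "w = prod.swap w'" ..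
  then obtain F c where F: "finite F" "F \<subseteq> S" "\<forall>v. 0 \<le> c v" and w': "w' = (\<Sum>v\<in>F. c v *\<^sub>R v)"
    unfolding poscone_def by blast
  have "w = (\<Sum>v\<in>F. c v *\<^sub>R prod.swap v)"
    unfolding w w' by (simp add: prod_eq_iff fst_sum snd_sum)
  also have "\<dots> = (\<Sum>v\<in>prod.swap ` F. c (prod.swap v) *\<^sub>R v)"
    by (subst sum.reindex) (auto simp: inj_on_def)
  finally have "w = (\<Sum>v\<in>prod.swap ` F. c (prod.swap v) *\<^sub>R v)" .
  then show "w \<in> poscone (prod.swap ` S)"
    unfolding poscone_def using F
    by (intro CollectI exI[of _ "prod.swap ` F"] exI[of _ "\<lambda>v. c (prod.swap v)"]) auto
qed

lemma poscone_swap: "poscone (prod.swap ` S) = prod.swap ` poscone S"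
proof
  have "prod.swap ` poscone (prod.swap ` S) \<subseteq> poscone S"
    using swap_poscone_subset[of "prod.swap ` S"] by (simp add: image_image)
  then show "poscone (prod.swap ` S) \<subseteq> prod.swap ` poscone S"
    using image_mono[of _ _ prod.swap] by (fastforce simp: image_image)
qed (rule swap_poscone_subset)

section \<open>The cones \<open>cone{-e\<^sub>1, e\<^sub>2}\<close> in the g-fan\<close>

lemma gvec_commute: "gvec b a T = prod.swap (gvec a b T)"
  by (simp add: gvec_def)

lemma indec_commute: "indec b a = indec a b"
  unfolding indec_def is_cx_def by (simp add: insert_commute)

lemma gfan_commute: "gfan b a = image prod.swap ` gfan a b"
  unfolding gfan_def indec_commute[where a = a and b = b] gvec_commute[where a = a and b = b]
  by (auto simp: image_image[of prod.swap "gvec a b", symmetric] poscone_swap)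

lemma gfan_quadrant_iff:
  fixes sc :: "'k::field \<Rightarrow> 'a::ring_1 \<Rightarrow> 'a" and e1 e2 :: 'a
  assumes fd: "fd_algebra sc" and e: "primitive_idem e1" "primitive_idem e2" "e1 \<noteq> e2"
  shows "poscone {(-1, 0), (0, 1)} \<in> gfan e1 e2 \<longleftrightarrow> corner e2 e1 = {0}"
proof
  assume "poscone {(-1, 0), (0, 1)} \<in> gfan e1 e2"
  then have "\<exists>Ts. poscone {(-1, 0), (0, 1)} = poscone (gvec e1 e2 ` set Ts)
      \<and> (\<forall>T\<in>set Ts. indec e1 e2 T)
      \<and> (\<forall>i<length Ts. \<forall>j<length Ts. i \<noteq> j \<longrightarrow> \<not> kiso (Ts ! i) (Ts ! j))
      \<and> presilting (foldr dsum Ts zero_cx)"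
    unfolding gfan_def by (simp only: mem_Collect_eq)
  then obtain Ts where eq: "poscone (gvec e1 e2 ` set Ts) = poscone {(-1, 0), (0, 1)}"
    and Ts: "\<forall>T\<in>set Ts. indec e1 e2 T" "presilting (foldr dsum Ts zero_cx)"
    by (elim exE conjE) simp
  obtain T where T: "T \<in> set Ts" "fst (gvec e1 e2 T) < 0" "snd (gvec e1 e2 T) = 0"
    using poscone_quadrant_witnesses(1)[OF eq] by (elim bexE imageE conjE) simp
  obtain T' where T': "T' \<in> set Ts" "fst (gvec e1 e2 T') = 0" "0 < snd (gvec e1 e2 T')"
    using poscone_quadrant_witnesses(2)[OF eq] by (elim bexE imageE conjE) simp
  have cx: "\<forall>T\<in>set Ts. is_cx e1 e2 T"
    using Ts(1) unfolding indec_def by blast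
  then have "hom_shift_zero T T'"
    using hom_shift_zero_if_presilting_foldr_dsum[OF _ Ts(2) T(1) T'(1)]
    unfolding is_cx_def wf_cx_def by blast
  moreover have "mult e1 (tgt T) < mult e1 (src T)" "mult e2 (tgt T) = mult e2 (src T)"
    and "mult e1 (tgt T') = mult e1 (src T')" "mult e2 (src T') < mult e2 (tgt T')"
    using T(2,3) T'(2,3) by (simp_all add: gvec_def)
  ultimately show "corner e2 e1 = {0}"
    using fin_dim_algebra.corner_eq_0_if_hom_shift_zero[OF fin_dim_algebra.intro[OF fd] e(3)]
      cx T(1) T'(1) by blast
next
  assume "corner e2 e1 = {0}"
  moreover have "idem e1" "idem e2"
    using e(1,2) unfolding primitive_idem_def by blast+
  ultimately have "poscone {gvec e1 e2 (shifted_proj e1), gvec e1 e2 (proj_cx e2)} \<in> gfan e1 e2"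
    using gfan_shifted_proj_proj_cx[OF e(1,2) refl] by blast
  moreover have "gvec e1 e2 (shifted_proj e1) = (-1, 0)" "gvec e1 e2 (proj_cx e2) = (0, 1)"
    using e(3) by (simp_all add: gvec_def mult_def)
  ultimately show "poscone {(-1, 0), (0, 1)} \<in> gfan e1 e2"
    by simp
qed

theorem proposition3p5:
  fixes sc :: "'k::field \<Rightarrow> 'a::ring_1 \<Rightarrow> 'a" and e1 e2 :: 'a
  assumes "fd_algebra sc"
    and "primitive_idem e1" and "primitive_idem e2"
    and "e1 * e2 = 0" and "e2 * e1 = 0" and "e1 + e2 = 1"
  shows "(poscone {(-1, 0), (0, 1)} \<in> gfan e1 e2 \<longleftrightarrow> corner e2 e1 = {0})
       \<and> (poscone {(1, 0), (0, -1)} \<in> gfan e1 e2 \<longleftrightarrow> corner e1 e2 = {0})"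
proof -
  have ne: "e1 \<noteq> e2"
    using assms(2,4) unfolding primitive_idem_def idem_def by auto
  have "inj (image (prod.swap :: real \<times> real \<Rightarrow> real \<times> real))"
    by (rule injI) (drule arg_cong[where f = "image prod.swap"], simp add: image_image)
  moreover have "prod.swap ` poscone {(1, 0), (0, -1)} = poscone {(-1, 0), (0, 1)}"
    by (simp add: poscone_swap[symmetric] insert_commute)
  ultimately have "poscone {(1, 0), (0, -1)} \<in> gfan e1 e2 \<longleftrightarrow> poscone {(-1, 0), (0, 1)} \<in> gfan e2 e1"
    unfolding gfan_commute[where a = e1 and b = e2] by (metis inj_image_mem_iff)
  then show ?thesis
    using gfan_quadrant_iff[OF assms(1-3) ne] gfan_quadrant_iff[OF assms(1,3,2) ne[symmetric]] by blast
qed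

end
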